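(* For all $n\ge1$, $$a_{\{0101,0102,0112\}}(n)=a_{\{0101,0102,0120\}}(n)=a_{\{0101,0102,0121\}}(n)=a_{\{0101,0112,0121\}}(n)=a_{\{0101,0120,0121\}}(n)=a_{\{0102,0120,0121\}}(n)=2^n-n.$$
   Context: An ascent in an integer sequence $s_1\cdots s_m$ is an index $j$ with $s_j<s_{j+1}$; $\mathrm{asc}$ denotes the number of ascents. An ascent sequence is a sequence $x_1\cdots x_n$ of nonnegative integers with $x_1=0$ and $x_i\le 1+\mathrm{asc}(x_1\cdots x_{i-1})$ for all $i\ge2$. The reduction $\mathrm{red}(w)$ of an integer sequence $w$ replaces the $i$-th smallest distinct letter of $w$ by $i-1$; a pattern is a reduced sequence. A sequence $x$ contains a pattern $p=p_1\cdots p_k$ if there are indices $i_1<\cdots<i_k$ with $\mathrm{red}(x_{i_1}\cdots x_{i_k})=p$; otherwise $x$ avoids $p$. For a finite set $P$ of patterns, $a_P(n)$ denotes the number of ascent sequences of length $n$ avoiding every pattern in $P$. *)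

theory Defs
  imports Main "HOL-Library.Sublist"
begin

definition asc :: "nat list \<Rightarrow> nat" where
  "asc s = card {j. Suc j < length s \<and> s ! j < s ! Suc j}"

(* ascent sequence: x_1 = 0 and x_i \<le> 1 + asc(x_1..x_(i-1)) for i \<ge> 2;
   we take ascent sequences to be nonempty (length n \<ge> 1 in the statement anyway) *)
definition ascent_seq :: "nat list \<Rightarrow> bool" where
  "ascent_seq x \<longleftrightarrow> x \<noteq> [] \<and> x ! 0 = 0 \<and>
     (\<forall>i. 0 < i \<and> i < length x \<longrightarrow> x ! i \<le> 1 + asc (take i x))"

definition red :: "nat list \<Rightarrow> nat list" where
  "red w = map (\<lambda>a. card {b \<in> set w. b < a}) w"

definition contains :: "nat list \<Rightarrow> nat list \<Rightarrow> bool" where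
  "contains x p \<longleftrightarrow> (\<exists>ys. subseq ys x \<and> red ys = p)"

definition avoids :: "nat list \<Rightarrow> nat list \<Rightarrow> bool" where
  "avoids x p \<longleftrightarrow> \<not> contains x p"

definition a_count :: "nat list set \<Rightarrow> nat \<Rightarrow> nat" where
  "a_count P n = card {x. ascent_seq x \<and> length x = n \<and> (\<forall>p\<in>P. avoids x p)}"

end

theory Submission
  imports Defs
begin

text \<open>Appending a letter \<open>v\<close> to an ascent sequence \<open>x\<close> that avoids a set of patterns
  gives again such a sequence iff \<open>v \<le> asc x + 1\<close> and no occurrence of a pattern ends in \<open>v\<close>.
  For each of the six pattern sets, which letters are admissible depends on \<open>x\<close> only through a
  state (for instance: \<open>x\<close> is weakly increasing with last letter \<open>m\<close>), and the state of
  \<open>x @ [v]\<close> is determined by the state of \<open>x\<close> and by \<open>v\<close>. Hence the avoiders of length \<open>n + 1\<close>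
  correspond to the words of length \<open>n\<close> accepted by a deterministic transition system, and
  counting these words according to the state they reach gives linear recurrences whose
  solutions add up to \<open>2 ^ (n + 1) - (n + 1)\<close>.\<close>

section \<open>Subsequences, reductions and new occurrences\<close>

lemma subseq_snoc_iff:
  "subseq ys (xs @ [v]) \<longleftrightarrow> subseq ys xs \<or> (\<exists>zs. ys = zs @ [v] \<and> subseq zs xs)"
proof
  assume "subseq ys (xs @ [v])"
  then obtain ys1 ys2 where "ys = ys1 @ ys2" "subseq ys1 xs" "subseq ys2 [v]"
    by (auto elim: subseq_appendE)
  moreover from \<open>subseq ys2 [v]\<close> have "ys2 = [] \<or> ys2 = [v]"
    by (cases ys2) (auto split: if_splits)
  ultimately show "subseq ys xs \<or> (\<exists>zs. ys = zs @ [v] \<and> subseq zs xs)" by auto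
qed (auto dest: subseq_rev_drop_many[of _ _ "[v]"])

lemma subseq_pair_snoc [simp]:
  "subseq [a, b] (xs @ [v]) \<longleftrightarrow> subseq [a, b] xs \<or> b = v \<and> a \<in> set xs"
  by (auto simp: subseq_snoc_iff subseq_singleton_left)

lemma subseq_triple_snoc [simp]:
  "subseq [a, b, c] (xs @ [v]) \<longleftrightarrow> subseq [a, b, c] xs \<or> c = v \<and> subseq [a, b] xs"
  by (auto simp: subseq_snoc_iff)

lemma subseq_triple_imp_pairs:
  assumes "subseq [a, b, c] xs"
  shows "subseq [a, b] xs" "subseq [a, c] xs" "subseq [b, c] xs"
  using subseq_order.order_trans[OF _ assms, of "[a, b]"]
    subseq_order.order_trans[OF _ assms, of "[a, c]"]
    subseq_order.order_trans[OF _ assms, of "[b, c]"]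
  by auto

lemma set_mono_subseq: "subseq xs ys \<Longrightarrow> set xs \<subseteq> set ys"
  by (induction rule: list_emb.induct) auto

lemma sorted_subseq: "subseq ys xs \<Longrightarrow> sorted xs \<Longrightarrow> sorted ys"
  by (auto simp: subseq_conv_nths sorted_nths)

lemma sorted_snoc_last: "sorted x \<Longrightarrow> x \<noteq> [] \<Longrightarrow> last x \<le> v \<Longrightarrow> sorted (x @ [v])"
  by (induction x rule: rev_induct) (auto simp: sorted_append)

lemma subseq_triple_in_set:
  "subseq [a, b, c] xs \<Longrightarrow> a \<in> set xs \<and> b \<in> set xs \<and> c \<in> set xs"
  using set_mono_subseq by fastforce

lemma subseq_triple_sorted: "subseq [a, b, c] xs \<Longrightarrow> sorted xs \<Longrightarrow> a \<le> b \<and> b \<le> c"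
  using sorted_subseq by fastforce

lemma length_red [simp]: "length (red w) = length w"
  by (simp add: red_def)

lemma red_nth: "i < length w \<Longrightarrow> red w ! i = card {b \<in> set w. b < w ! i}"
  by (simp add: red_def)

lemma red_less_iff:
  assumes "i < length w" "j < length w"
  shows "red w ! i < red w ! j \<longleftrightarrow> w ! i < w ! j"
proof
  assume "w ! i < w ! j"
  then have "{b \<in> set w. b < w ! i} \<subseteq> {b \<in> set w. b < w ! j}" by auto
  moreover have "w ! i \<in> {b \<in> set w. b < w ! j} - {b \<in> set w. b < w ! i}"
    using assms(1) \<open>w ! i < w ! j\<close> by simp
  ultimately have "{b \<in> set w. b < w ! i} \<subset> {b \<in> set w. b < w ! j}" by blast
  then show "red w ! i < red w ! j"
    using assms by (simp add: red_nth psubset_card_mono)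
next
  assume "red w ! i < red w ! j"
  show "w ! i < w ! j"
  proof (rule ccontr)
    assume "\<not> w ! i < w ! j"
    then have "card {b \<in> set w. b < w ! j} \<le> card {b \<in> set w. b < w ! i}"
      by (intro card_mono) auto
    with \<open>red w ! i < red w ! j\<close> assms show False
      by (simp add: red_nth)
  qed
qed

lemma red_filter: "red w = map (\<lambda>a. card (set (filter (\<lambda>b. b < a) w))) w"
  by (simp add: red_def)

definition new_occurrence :: "nat list \<Rightarrow> nat list \<Rightarrow> nat \<Rightarrow> bool" where
  "new_occurrence p x v \<longleftrightarrow> (\<exists>ys. subseq ys x \<and> red (ys @ [v]) = p)"

lemma contains_snoc: "contains (x @ [v]) p \<longleftrightarrow> contains x p \<or> new_occurrence p x v"
  unfolding contains_def new_occurrence_def subseq_snoc_iff by blast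

lemma new_occurrenceI:
  "subseq ys x \<Longrightarrow> red (ys @ [v]) = p \<Longrightarrow> new_occurrence p x v"
  unfolding new_occurrence_def by blast

lemma new_occurrence_length_4E:
  assumes "new_occurrence p x v" "length p = 4"
  obtains a b c where "subseq [a, b, c] x" "red [a, b, c, v] = p"
proof -
  obtain ys where ys: "subseq ys x" "red (ys @ [v]) = p"
    using assms(1) by (auto simp: new_occurrence_def)
  then have "length ys = 3"
    using assms(2) length_red[of "ys @ [v]"] by simp
  then obtain a b c where "ys = [a, b, c]" by (auto simp: numeral_eq_Suc length_Suc_conv)
  with ys that show thesis
    by simp
qed

lemma red_4_less_iff:
  assumes "red [a, b, c, d] = p"
  shows "(a < b \<longleftrightarrow> p!0 < p!1) \<and> (b < a \<longleftrightarrow> p!1 < p!0)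
    \<and> (a < c \<longleftrightarrow> p!0 < p!2) \<and> (c < a \<longleftrightarrow> p!2 < p!0)
    \<and> (a < d \<longleftrightarrow> p!0 < p!3) \<and> (d < a \<longleftrightarrow> p!3 < p!0)
    \<and> (b < c \<longleftrightarrow> p!1 < p!2) \<and> (c < b \<longleftrightarrow> p!2 < p!1)
    \<and> (b < d \<longleftrightarrow> p!1 < p!3) \<and> (d < b \<longleftrightarrow> p!3 < p!1)
    \<and> (c < d \<longleftrightarrow> p!2 < p!3) \<and> (d < c \<longleftrightarrow> p!3 < p!2)"
  using assms red_less_iff[of _ "[a, b, c, d]"] by force

lemma new_occurrence_0101:
  "new_occurrence [0,1,0,1] x v \<longleftrightarrow> (\<exists>a. subseq [a, v, a] x \<and> a < v)"
proof
  assume "new_occurrence [0,1,0,1] x v"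
  then obtain a b c where abc: "subseq [a, b, c] x" "red [a, b, c, v] = [0,1,0,1]"
    by (rule new_occurrence_length_4E) simp
  from red_4_less_iff[OF abc(2)] have "a < v" "b = v" "c = a" by auto
  with abc(1) show "\<exists>a. subseq [a, v, a] x \<and> a < v" by blast
qed (auto intro: new_occurrenceI simp: red_filter)

lemma new_occurrence_0102:
  "new_occurrence [0,1,0,2] x v \<longleftrightarrow> (\<exists>a b. subseq [a, b, a] x \<and> a < b \<and> b < v)"
proof
  assume "new_occurrence [0,1,0,2] x v"
  then obtain a b c where abc: "subseq [a, b, c] x" "red [a, b, c, v] = [0,1,0,2]"
    by (rule new_occurrence_length_4E) simp
  from red_4_less_iff[OF abc(2)] have "a < b" "b < v" "c = a" by auto
  with abc(1) show "\<exists>a b. subseq [a, b, a] x \<and> a < b \<and> b < v" by blast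
qed (auto intro: new_occurrenceI simp: red_filter card_insert_if)

lemma new_occurrence_0112:
  "new_occurrence [0,1,1,2] x v \<longleftrightarrow> (\<exists>a b. subseq [a, b, b] x \<and> a < b \<and> b < v)"
proof
  assume "new_occurrence [0,1,1,2] x v"
  then obtain a b c where abc: "subseq [a, b, c] x" "red [a, b, c, v] = [0,1,1,2]"
    by (rule new_occurrence_length_4E) simp
  from red_4_less_iff[OF abc(2)] have "a < b" "b < v" "c = b" by auto
  with abc(1) show "\<exists>a b. subseq [a, b, b] x \<and> a < b \<and> b < v" by blast
qed (auto intro: new_occurrenceI simp: red_filter card_insert_if)

lemma new_occurrence_0120:
  "new_occurrence [0,1,2,0] x v \<longleftrightarrow> (\<exists>b c. subseq [v, b, c] x \<and> v < b \<and> b < c)"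
proof
  assume "new_occurrence [0,1,2,0] x v"
  then obtain a b c where abc: "subseq [a, b, c] x" "red [a, b, c, v] = [0,1,2,0]"
    by (rule new_occurrence_length_4E) simp
  from red_4_less_iff[OF abc(2)] have "a = v" "v < b" "b < c" by auto
  with abc(1) show "\<exists>b c. subseq [v, b, c] x \<and> v < b \<and> b < c" by blast
qed (auto intro: new_occurrenceI simp: red_filter card_insert_if)

lemma new_occurrence_0121:
  "new_occurrence [0,1,2,1] x v \<longleftrightarrow> (\<exists>a c. subseq [a, v, c] x \<and> a < v \<and> v < c)"
proof
  assume "new_occurrence [0,1,2,1] x v"
  then obtain a b c where abc: "subseq [a, b, c] x" "red [a, b, c, v] = [0,1,2,1]"
    by (rule new_occurrence_length_4E) simp
  from red_4_less_iff[OF abc(2)] have "a < v" "b = v" "v < c" by auto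
  with abc(1) show "\<exists>a c. subseq [a, v, c] x \<and> a < v \<and> v < c" by blast
qed (auto intro: new_occurrenceI simp: red_filter card_insert_if)

lemma new_occurrence_0101I: "subseq [a, v, a] x \<Longrightarrow> a < v \<Longrightarrow> new_occurrence [0,1,0,1] x v"
  unfolding new_occurrence_0101 by blast

lemma new_occurrence_0102I:
  "subseq [a, b, a] x \<Longrightarrow> a < b \<Longrightarrow> b < v \<Longrightarrow> new_occurrence [0,1,0,2] x v"
  unfolding new_occurrence_0102 by blast

lemma new_occurrence_0112I:
  "subseq [a, b, b] x \<Longrightarrow> a < b \<Longrightarrow> b < v \<Longrightarrow> new_occurrence [0,1,1,2] x v"
  unfolding new_occurrence_0112 by blast

lemma new_occurrence_0120I:
  "subseq [v, b, c] x \<Longrightarrow> v < b \<Longrightarrow> b < c \<Longrightarrow> new_occurrence [0,1,2,0] x v"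
  unfolding new_occurrence_0120 by blast

lemma new_occurrence_0121I:
  "subseq [a, v, c] x \<Longrightarrow> a < v \<Longrightarrow> v < c \<Longrightarrow> new_occurrence [0,1,2,1] x v"
  unfolding new_occurrence_0121 by blast

section \<open>Ascent sequences avoiding patterns\<close>

lemma asc_snoc:
  assumes "x \<noteq> []"
  shows "asc (x @ [v]) = asc x + (if last x < v then 1 else 0)"
proof -
  let ?A = "{j. Suc j < length x \<and> x ! j < x ! Suc j}"
  have "j \<in> {j. Suc j < length (x @ [v]) \<and> (x @ [v]) ! j < (x @ [v]) ! Suc j}
      \<longleftrightarrow> j \<in> ?A \<union> {j. Suc j = length x \<and> last x < v}" for j
    using assms by (cases "Suc j = length x")
      (auto simp: nth_append last_conv_nth dest!: sym[of "Suc j"])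
  then have "{j. Suc j < length (x @ [v]) \<and> (x @ [v]) ! j < (x @ [v]) ! Suc j}
      = ?A \<union> {j. Suc j = length x \<and> last x < v}" by blast
  moreover have "finite ?A" by (rule finite_subset[of _ "{..<length x}"]) auto
  moreover have "length x - 1 \<notin> ?A"
    using assms by simp
  moreover have "{j. Suc j = length x \<and> last x < v} = (if last x < v then {length x - 1} else {})"
    using assms by auto
  ultimately show ?thesis by (simp add: asc_def card_Un_disjoint)
qed

lemma ascent_seq_snoc:
  assumes "x \<noteq> []"
  shows "ascent_seq (x @ [v]) \<longleftrightarrow> ascent_seq x \<and> v \<le> Suc (asc x)"
  using assms unfolding ascent_seq_def
  by (auto simp: nth_append less_Suc_eq all_conj_distrib)

lemma asc_singleton [simp]: "asc [v] = 0"
  by (simp add: asc_def)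

lemma ascent_seq_singleton_iff: "ascent_seq [v] \<longleftrightarrow> v = 0"
  by (simp add: ascent_seq_def)

lemma ascent_seq_le_asc:
  assumes "ascent_seq x" "e \<in> set x"
  shows "e \<le> asc x"
  using assms
proof (induction x arbitrary: e rule: rev_induct)
  case (snoc v xs)
  show ?case
  proof (cases "xs = []")
    case True
    with snoc.prems show ?thesis by (simp add: ascent_seq_singleton_iff)
  next
    case False
    with snoc.prems have "ascent_seq xs" "v \<le> Suc (asc xs)" by (simp_all add: ascent_seq_snoc)
    with snoc.IH have IH: "e \<le> asc xs" if "e \<in> set xs" for e
      using that by blast
    with False have "last xs \<le> asc xs" by simp
    with \<open>v \<le> Suc (asc xs)\<close> False have "v \<le> asc (xs @ [v])"
      by (simp add: asc_snoc)
    moreover from False have "asc xs \<le> asc (xs @ [v])" by (simp add: asc_snoc)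
    ultimately show ?thesis
      using IH snoc.prems(2) by fastforce
  qed
qed simp

lemma sorted_ascent_seq:
  assumes "ascent_seq x" "sorted x"
  shows "asc x = last x \<and> set x = {..last x}"
  using assms
proof (induction x rule: rev_induct)
  case (snoc v xs)
  show ?case
  proof (cases "xs = []")
    case True
    with snoc.prems show ?thesis by (auto simp: ascent_seq_singleton_iff)
  next
    case False
    with snoc.prems have "ascent_seq xs" "v \<le> Suc (asc xs)" "sorted xs" "last xs \<le> v"
      by (simp_all add: ascent_seq_snoc sorted_append)
    with snoc.IH have "asc xs = last xs" "set xs = {..last xs}" by simp_all
    with \<open>v \<le> Suc (asc xs)\<close> \<open>last xs \<le> v\<close> False show ?thesis
      by (auto simp: asc_snoc le_Suc_eq)
  qed
qed (simp add: ascent_seq_def)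

definition avoider :: "nat list set \<Rightarrow> nat list \<Rightarrow> bool" where
  "avoider P x \<longleftrightarrow> ascent_seq x \<and> (\<forall>p\<in>P. avoids x p)"

lemma avoider_snoc:
  assumes "x \<noteq> []"
  shows "avoider P (x @ [v]) \<longleftrightarrow>
    avoider P x \<and> v \<le> Suc (asc x) \<and> (\<forall>p\<in>P. \<not> new_occurrence p x v)"
  unfolding avoider_def avoids_def contains_snoc ascent_seq_snoc[OF assms] by blast

lemma avoider_nonempty: "avoider P x \<Longrightarrow> x \<noteq> []"
  by (auto simp: avoider_def ascent_seq_def)

lemma new_occurrence_not_avoider:
  "new_occurrence p x v \<Longrightarrow> p \<in> P \<Longrightarrow> \<not> avoider P (x @ [v])"
  by (auto simp: avoider_def avoids_def contains_snoc)

lemma avoider_le_asc: "avoider P x \<Longrightarrow> e \<in> set x \<Longrightarrow> e \<le> asc x"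
  by (auto simp: avoider_def ascent_seq_le_asc)

lemma avoider_sorted:
  assumes "avoider P x" "sorted x"
  shows "asc x = last x" "set x = {..last x}"
  using assms sorted_ascent_seq by (auto simp: avoider_def)

lemma avoider_sorted_subseq:
  assumes "avoider P x" "sorted x" "sorted_wrt (<) ys" "set ys \<subseteq> {..last x}"
  shows "subseq ys x"
  using sorted_subset_imp_subseq[of ys x] avoider_sorted[OF assms(1,2)] assms(2-4) by simp

lemma avoider_sorted_triple:
  assumes "avoider P x" "sorted x" "subseq [a, b, c] x"
  shows "a \<le> b \<and> b \<le> c \<and> c \<le> last x"
  using subseq_triple_sorted[OF assms(3,2)] subseq_triple_in_set[OF assms(3)]
    avoider_sorted(2)[OF assms(1,2)] by auto

lemma avoider_singleton:
  assumes "\<And>p. p \<in> P \<Longrightarrow> 2 \<le> length p"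
  shows "avoider P [0]"
proof -
  have "\<not> contains [0] p" if "p \<in> P" for p
  proof
    assume "contains [0] p"
    then obtain ys where "subseq ys [0]" "red ys = p" by (auto simp: contains_def)
    then have "length p \<le> 1"
      using list_emb_length by fastforce
    with assms that show False
      by fastforce
  qed
  then show ?thesis by (simp add: avoider_def avoids_def ascent_seq_singleton_iff)
qed

lemma a_count_Suc: "a_count P (Suc n) = card {xs. length xs = n \<and> avoider P (0 # xs)}"
proof -
  have "{x. ascent_seq x \<and> length x = Suc n \<and> (\<forall>p\<in>P. avoids x p)}
      = (\<lambda>xs. 0 # xs) ` {xs. length xs = n \<and> avoider P (0 # xs)}"
    by (auto simp: avoider_def ascent_seq_def length_Suc_conv)
  then show ?thesis by (simp add: a_count_def card_image)
qed

section \<open>Counting the words accepted by a transition system\<close>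

definition run :: "('q \<Rightarrow> (nat \<times> 'q) list) \<Rightarrow> 'q \<Rightarrow> nat list \<Rightarrow> 'q option" where
  "run T q xs = fold (\<lambda>v r. Option.bind r (\<lambda>q'. map_of (T q') v)) xs (Some q)"

lemma run_Nil [simp]: "run T q [] = Some q"
  by (simp add: run_def)

lemma run_snoc [simp]: "run T q (xs @ [v]) = Option.bind (run T q xs) (\<lambda>q'. map_of (T q') v)"
  by (simp add: run_def)

definition words_to :: "('q \<Rightarrow> (nat \<times> 'q) list) \<Rightarrow> 'q \<Rightarrow> nat \<Rightarrow> ('q \<Rightarrow> bool) \<Rightarrow> nat list set" where
  "words_to T q n \<Phi> = {xs. length xs = n \<and> (\<exists>q'. run T q xs = Some q' \<and> \<Phi> q')}"

lemma words_to_0: "words_to T q 0 \<Phi> = (if \<Phi> q then {[]} else {})"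
  by (auto simp: words_to_def)

lemma words_to_Suc:
  "words_to T q (Suc n) \<Phi> = (\<lambda>(xs, v). xs @ [v]) `
     (SIGMA xs:words_to T q n (\<lambda>_. True). {v. \<exists>q'. run T q (xs @ [v]) = Some q' \<and> \<Phi> q'})"
proof (intro set_eqI iffI)
  fix ys assume "ys \<in> words_to T q (Suc n) \<Phi>"
  then obtain xs v where "ys = xs @ [v]" "length xs = n" "\<exists>q'. run T q (xs @ [v]) = Some q' \<and> \<Phi> q'"
    by (auto simp: words_to_def length_Suc_conv_rev)
  then show "ys \<in> (\<lambda>(xs, v). xs @ [v]) `
     (SIGMA xs:words_to T q n (\<lambda>_. True). {v. \<exists>q'. run T q (xs @ [v]) = Some q' \<and> \<Phi> q'})"
    by (auto simp: words_to_def split: Option.bind_splits)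
qed (auto simp: words_to_def)

lemma finite_successors: "finite {v. \<exists>q'. run T q (xs @ [v]) = Some q' \<and> \<Phi> q'}"
proof (cases "run T q xs")
  case (Some q')
  then have "{v. \<exists>q''. run T q (xs @ [v]) = Some q'' \<and> \<Phi> q''} \<subseteq> fst ` set (T q')"
    by (force dest: map_of_SomeD)
  then show ?thesis by (rule finite_subset) simp
qed simp

lemma finite_words_to: "finite (words_to T q n \<Phi>)"
proof (induction n arbitrary: \<Phi>)
  case 0
  show ?case by (simp add: words_to_0)
next
  case (Suc n)
  then show ?case
    unfolding words_to_Suc by (intro finite_imageI finite_SigmaI finite_successors)
qed

lemma card_successors:
  assumes "distinct (map fst (T q))"
  shows "card {v. \<exists>q'. map_of (T q) v = Some q' \<and> \<Phi> q'} = length (filter (\<Phi> \<circ> snd) (T q))"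
proof -
  have "{v. \<exists>q'. map_of (T q) v = Some q' \<and> \<Phi> q'} = set (map fst (filter (\<Phi> \<circ> snd) (T q)))"
    using assms by (force simp: map_of_eq_Some_iff)
  moreover have "distinct (map fst (filter (\<Phi> \<circ> snd) (T q)))"
    using assms by (simp add: distinct_map_filter)
  ultimately show ?thesis by (metis distinct_card length_map)
qed

lemma card_words_to_partition:
  fixes cls :: "'q \<Rightarrow> nat"
  assumes "\<And>q. cls q < r"
  shows "card (words_to T q0 n (\<lambda>_. True)) = (\<Sum>i<r. card (words_to T q0 n (\<lambda>q. cls q = i)))"
proof -
  have "words_to T q0 n (\<lambda>_. True) = (\<Union>i<r. words_to T q0 n (\<lambda>q. cls q = i))"
    using assms by (auto simp: words_to_def)
  then have "card (words_to T q0 n (\<lambda>_. True)) = card (\<Union>i<r. words_to T q0 n (\<lambda>q. cls q = i))"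
    by simp
  also have "\<dots> = (\<Sum>i<r. card (words_to T q0 n (\<lambda>q. cls q = i)))"
  proof (rule card_UN_disjoint)
    show "\<forall>i\<in>{..<r}. \<forall>j\<in>{..<r}. i \<noteq> j \<longrightarrow>
        words_to T q0 n (\<lambda>q. cls q = i) \<inter> words_to T q0 n (\<lambda>q. cls q = j) = {}"
      by (auto simp: words_to_def)
  qed (simp_all add: finite_words_to)
  finally show ?thesis .
qed

lemma card_words_to_Suc:
  fixes cls :: "'q \<Rightarrow> nat"
  assumes distinct: "\<And>q. distinct (map fst (T q))"
    and weight: "\<And>q. length (filter (\<Phi> \<circ> snd) (T q)) = c (cls q)"
    and cls: "\<And>q. cls q < r"
  shows "card (words_to T q0 (Suc n) \<Phi>) = (\<Sum>i<r. c i * card (words_to T q0 n (\<lambda>q. cls q = i)))"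
proof -
  let ?W = "\<lambda>i. words_to T q0 n (\<lambda>q. cls q = i)"
  let ?ext = "\<lambda>xs. {v. \<exists>q'. run T q0 (xs @ [v]) = Some q' \<and> \<Phi> q'}"
  have card_ext: "card (?ext xs) = c i" if "xs \<in> ?W i" for xs i
  proof -
    from that obtain q where "run T q0 xs = Some q" "cls q = i" by (auto simp: words_to_def)
    then show ?thesis
      using card_successors[of T q \<Phi>, OF distinct] weight[of q] by simp
  qed
  have "card (words_to T q0 (Suc n) \<Phi>) = card (SIGMA xs:words_to T q0 n (\<lambda>_. True). ?ext xs)"
    unfolding words_to_Suc by (rule card_image) (auto simp: inj_on_def)
  also have "\<dots> = (\<Sum>xs\<in>words_to T q0 n (\<lambda>_. True). card (?ext xs))"
    by (intro card_SigmaI finite_words_to ballI finite_successors)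
  also have "words_to T q0 n (\<lambda>_. True) = (\<Union>i<r. ?W i)"
    using cls by (auto simp: words_to_def)
  also have "(\<Sum>xs\<in>(\<Union>i<r. ?W i). card (?ext xs)) = (\<Sum>i<r. \<Sum>xs\<in>?W i. card (?ext xs))"
  proof (rule sum.UNION_disjoint)
    show "\<forall>i\<in>{..<r}. \<forall>j\<in>{..<r}. i \<noteq> j \<longrightarrow> ?W i \<inter> ?W j = {}"
      by (auto simp: words_to_def)
  qed (simp_all add: finite_words_to)
  also have "\<dots> = (\<Sum>i<r. c i * card (?W i))"
    using card_ext by (intro sum.cong refl) (simp cong: sum.cong del: run_snoc)
  finally show ?thesis .
qed

lemma card_words_to_Suc_single:
  assumes "\<And>q. distinct (map fst (T q))"
    and "\<And>q. length (filter (\<Phi> \<circ> snd) (T q)) = (if \<Psi> q then 1 else 0)"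
  shows "card (words_to T q0 (Suc n) \<Phi>) = card (words_to T q0 n \<Psi>)"
proof -
  have "card (words_to T q0 (Suc n) \<Phi>) =
      (\<Sum>i<2. i * card (words_to T q0 n (\<lambda>q. (if \<Psi> q then 1 else 0) = i)))"
    using assms by (intro card_words_to_Suc) auto
  also have "\<dots> = card (words_to T q0 n (\<lambda>q. (if \<Psi> q then 1 else 0) = (1::nat)))"
    by (simp add: numeral_eq_Suc)
  also have "words_to T q0 n (\<lambda>q. (if \<Psi> q then 1 else 0) = (1::nat)) = words_to T q0 n \<Psi>"
    by (auto simp: words_to_def)
  finally show ?thesis .
qed

lemma card_words_to_disj:
  assumes "\<And>q. \<not> (\<Phi> q \<and> \<Psi> q)"
  shows "card (words_to T q0 n (\<lambda>q. \<Phi> q \<or> \<Psi> q)) =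
      card (words_to T q0 n \<Phi>) + card (words_to T q0 n \<Psi>)"
proof -
  have "words_to T q0 n (\<lambda>q. \<Phi> q \<or> \<Psi> q) = words_to T q0 n \<Phi> \<union> words_to T q0 n \<Psi>"
    by (auto simp: words_to_def)
  moreover have "words_to T q0 n \<Phi> \<inter> words_to T q0 n \<Psi> = {}"
    using assms by (auto simp: words_to_def)
  ultimately show ?thesis by (simp add: card_Un_disjoint finite_words_to)
qed

text \<open>A run reads an ascent sequence after its initial letter 0, so \<open>q\<^sub>0\<close> is the state of
  \<open>[0]\<close>; \<open>inv q x\<close> is what the state \<open>q\<close> records about the sequence \<open>x\<close>.\<close>

locale avoider_automaton =
  fixes P :: "nat list set"
    and T :: "'q \<Rightarrow> (nat \<times> 'q) list"
    and q\<^sub>0 :: 'q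
    and inv :: "'q \<Rightarrow> nat list \<Rightarrow> bool"
  assumes patterns_long: "\<And>p. p \<in> P \<Longrightarrow> 2 \<le> length p"
    and distinct_letters: "\<And>q. distinct (map fst (T q))"
    and inv_q\<^sub>0: "inv q\<^sub>0 [0]"
    and letters_iff: "\<And>q x v. avoider P x \<Longrightarrow> inv q x \<Longrightarrow> v \<in> fst ` set (T q) \<longleftrightarrow> avoider P (x @ [v])"
    and inv_step: "\<And>q q' x v. avoider P x \<Longrightarrow> inv q x \<Longrightarrow> (v, q') \<in> set (T q) \<Longrightarrow> inv q' (x @ [v])"
begin

lemma run_correct:
  "(run T q\<^sub>0 xs \<noteq> None \<longleftrightarrow> avoider P (0 # xs)) \<and> (\<forall>q. run T q\<^sub>0 xs = Some q \<longrightarrow> inv q (0 # xs))"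
proof (induction xs rule: rev_induct)
  case Nil
  show ?case
    using avoider_singleton[OF patterns_long] inv_q\<^sub>0 by simp
next
  case (snoc v xs)
  show ?case
  proof (cases "run T q\<^sub>0 xs")
    case None
    with snoc.IH show ?thesis
      using avoider_snoc[of "0 # xs" P v] by simp
  next
    case (Some q)
    with snoc.IH have av: "avoider P (0 # xs)" and inv: "inv q (0 # xs)" by auto
    have "run T q\<^sub>0 (xs @ [v]) \<noteq> None \<longleftrightarrow> v \<in> fst ` set (T q)"
      using Some by (simp only: run_snoc bind.simps dom_map_of_conv_image_fst[symmetric] domIff)
    with letters_iff[OF av inv] have "run T q\<^sub>0 (xs @ [v]) \<noteq> None \<longleftrightarrow> avoider P (0 # xs @ [v])"
      by simp
    moreover have "inv q' (0 # xs @ [v])" if "run T q\<^sub>0 (xs @ [v]) = Some q'" for q'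
      using inv_step[OF av inv map_of_SomeD, of v q'] that Some by simp
    ultimately show ?thesis by blast
  qed
qed

lemma a_count_Suc_eq: "a_count P (Suc n) = card (words_to T q\<^sub>0 n (\<lambda>_. True))"
  unfolding a_count_Suc words_to_def using run_correct by (metis not_None_eq)

end

section \<open>Avoiders of 0101, 0102, 0112\<close>

abbreviation patterns_A :: "nat list set" where
  "patterns_A \<equiv> {[0,1,0,1], [0,1,0,2], [0,1,1,2]}"

lemma avoider_A_snoc:
  assumes "avoider patterns_A x"
  shows "avoider patterns_A (x @ [v]) \<longleftrightarrow> v \<le> Suc (asc x)
    \<and> \<not> (\<exists>a. subseq [a, v, a] x \<and> a < v)
    \<and> \<not> (\<exists>a b. subseq [a, b, a] x \<and> a < b \<and> b < v)
    \<and> \<not> (\<exists>a b. subseq [a, b, b] x \<and> a < b \<and> b < v)"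
  unfolding avoider_snoc[OF avoider_nonempty[OF assms]] ball_simps
    new_occurrence_0101 new_occurrence_0102 new_occurrence_0112
  using assms by blast

text \<open>The avoiders are the words \<open>0\<dots>0 1 2 \<dots> m w\<close> with \<open>w\<close> weakly decreasing and bounded by
  \<open>m\<close>. In state \<open>A_Run k\<close> the word read so far is \<open>0\<dots>0 1 2 \<dots> (k + 1)\<close>; in state \<open>A_Desc l\<close>
  the decreasing part has started and ends in \<open>l\<close>.\<close>

datatype state_A = A_Zeros | A_Run nat | A_Desc nat

fun trans_A :: "state_A \<Rightarrow> (nat \<times> state_A) list" where
  "trans_A A_Zeros = [(0, A_Zeros), (1, A_Run 0)]"
| "trans_A (A_Run k) = (Suc (Suc k), A_Run (Suc k)) # map (\<lambda>v. (v, A_Desc v)) [0..<Suc (Suc k)]"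
| "trans_A (A_Desc l) = map (\<lambda>v. (v, A_Desc v)) [0..<Suc l]"

fun inv_A :: "state_A \<Rightarrow> nat list \<Rightarrow> bool" where
  "inv_A A_Zeros x \<longleftrightarrow> sorted x \<and> last x = 0"
| "inv_A (A_Run k) x \<longleftrightarrow> sorted x \<and> last x = Suc k \<and> (\<forall>a b. a < b \<longrightarrow> \<not> subseq [a, b, b] x)"
| "inv_A (A_Desc l) x \<longleftrightarrow> last x = l
     \<and> (\<forall>a b. a < b \<and> b \<le> l \<longrightarrow> \<not> subseq [a, b, a] x) \<and> (\<forall>a b. a < b \<and> b < l \<longrightarrow> \<not> subseq [a, b, b] x)
     \<and> (subseq [l, Suc l, l] x \<or> (\<exists>a<l. subseq [a, l, l] x)) \<and> (\<forall>u<l. subseq [u, Suc u] x)"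

lemma A_zeros_extend:
  assumes x: "avoider patterns_A x" "inv_A A_Zeros x"
  shows "avoider patterns_A (x @ [v]) \<longleftrightarrow> v \<le> 1"
proof -
  from x have sorted: "sorted x" and asc: "asc x = 0" and set: "set x = {0}"
    using avoider_sorted[of patterns_A x] by auto
  then have "a = 0 \<and> b = 0 \<and> c = 0" if "subseq [a, b, c] x" for a b c
    using subseq_triple_in_set[OF that] by simp
  then show ?thesis
    unfolding avoider_A_snoc[OF x(1)] asc by auto
qed

lemma A_run_extend:
  assumes x: "avoider patterns_A x" "inv_A (A_Run k) x"
  shows "avoider patterns_A (x @ [v]) \<longleftrightarrow> v \<le> Suc (Suc k)"
proof -
  from x(2) have sorted: "sorted x" and no_abb: "\<And>a b. a < b \<Longrightarrow> \<not> subseq [a, b, b] x"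
    by auto
  from x have asc: "asc x = Suc k"
    using avoider_sorted[of patterns_A x] by simp
  have sorted_triples: "a \<le> b \<and> b \<le> c" if "subseq [a, b, c] x" for a b c
    using subseq_triple_sorted[OF that sorted] .
  show ?thesis
    unfolding avoider_A_snoc[OF x(1)] asc by (auto dest: no_abb sorted_triples)
qed

lemma A_desc_extend:
  assumes x: "avoider patterns_A x" "inv_A (A_Desc l) x"
  shows "avoider patterns_A (x @ [v]) \<longleftrightarrow> v \<le> l"
proof (cases "v \<le> l")
  case True
  from x(2) have no_aba: "\<And>a b. a < b \<Longrightarrow> b \<le> l \<Longrightarrow> \<not> subseq [a, b, a] x"
    and no_abb: "\<And>a b. a < b \<Longrightarrow> b < l \<Longrightarrow> \<not> subseq [a, b, b] x"
    by auto
  from x(2) have "last x = l" by simp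
  then have "l \<in> set x"
    using last_in_set[OF avoider_nonempty[OF x(1)]] by simp
  then have "l \<le> asc x" by (rule avoider_le_asc[OF x(1)])
  with True show ?thesis
    unfolding avoider_A_snoc[OF x(1)] by (auto dest: no_aba no_abb)
next
  case False
  from x(2) have "subseq [l, Suc l, l] x \<or> (\<exists>a<l. subseq [a, l, l] x)" by simp
  with False consider (up) "v = Suc l" "subseq [l, Suc l, l] x"
    | (high) "Suc l < v" "subseq [l, Suc l, l] x" | (flat) a where "a < l" "subseq [a, l, l] x"
    by (metis Suc_lessI not_le)
  then show ?thesis
  proof cases
    case up
    then have "new_occurrence [0,1,0,1] x v" by (intro new_occurrence_0101I[of l]) auto
    with False show ?thesis
      using new_occurrence_not_avoider[of _ x v patterns_A] by simp
  next
    case high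
    then have "new_occurrence [0,1,0,2] x v" by (intro new_occurrence_0102I[of l "Suc l"]) auto
    with False show ?thesis
      using new_occurrence_not_avoider[of _ x v patterns_A] by simp
  next
    case (flat a)
    with False have "new_occurrence [0,1,1,2] x v" by (intro new_occurrence_0112I[of a l]) auto
    with False show ?thesis
      using new_occurrence_not_avoider[of _ x v patterns_A] by simp
  qed
qed

lemma A_zeros_step:
  assumes x: "avoider patterns_A x" "inv_A A_Zeros x" and step: "(v, q') \<in> set (trans_A A_Zeros)"
  shows "inv_A q' (x @ [v])"
proof -
  from x have sorted: "sorted x" and set: "set x = {0}"
    using avoider_sorted[of patterns_A x] by auto
  from step consider "v = 0" "q' = A_Zeros" | "v = 1" "q' = A_Run 0" by auto
  then show ?thesis
  proof cases
    case 1
    with sorted set show ?thesis by (simp add: sorted_append)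
  next
    case 2
    have "\<not> subseq [a, 1] x" for a
      using set set_mono_subseq[of "[a, 1]" x] by auto
    moreover have "\<not> subseq [a, b, b] x" if "a < b" for a b
      using that subseq_triple_in_set[of a b b x] set by auto
    ultimately show ?thesis
      using 2 sorted set by (simp add: sorted_append)
  qed
qed

lemma A_run_step:
  assumes x: "avoider patterns_A x" "inv_A (A_Run k) x"
    and step: "(v, q') \<in> set (trans_A (A_Run k))"
  shows "inv_A q' (x @ [v])"
proof -
  from x(2) have sorted: "sorted x" and last: "last x = Suc k"
    and no_abb: "\<forall>a b. a < b \<longrightarrow> \<not> subseq [a, b, b] x" by simp_all
  note stair = avoider_sorted_subseq[OF x(1) sorted, unfolded last]
  have no_aba: "\<not> subseq [a, b, a] x" if "a < b" for a b
    using subseq_triple_sorted[OF _ sorted, of a b a] that by auto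
  from step consider (up) "v = Suc (Suc k)" "q' = A_Run (Suc k)"
    | (down) "v \<le> Suc k" "q' = A_Desc v"
    by (auto simp: less_Suc_eq_le)
  then show ?thesis
  proof cases
    case up
    have "\<not> subseq [a, Suc (Suc k)] x" for a
      using avoider_sorted(2)[OF x(1) sorted] last set_mono_subseq[of "[a, Suc (Suc k)]" x] by auto
    with up sorted last no_abb avoider_nonempty[OF x(1)] show ?thesis
      by (auto intro: sorted_snoc_last)
  next
    case down
    have "subseq [v, Suc v, v] (x @ [v]) \<or> (\<exists>a<v. subseq [a, v, v] (x @ [v]))"
    proof (cases "v \<le> k")
      case True
      then have "subseq [v, Suc v] x" by (intro stair) auto
      then show ?thesis by simp
    next
      case False
      with down have "v = Suc k" by simp
      moreover have "subseq [k, Suc k] x" by (intro stair) auto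
      ultimately show ?thesis by auto
    qed
    moreover have "subseq [u, Suc u] x" if "u < v" for u
      using that down by (intro stair) auto
    ultimately show ?thesis
      using down no_aba no_abb by auto
  qed
qed

lemma A_desc_step:
  assumes x: "inv_A (A_Desc l) x" and step: "(v, q') \<in> set (trans_A (A_Desc l))"
  shows "inv_A q' (x @ [v])"
proof -
  from step have v: "v \<le> l" "q' = A_Desc v" by (auto simp: less_Suc_eq_le)
  from x have rise: "\<forall>u<l. subseq [u, Suc u] x"
    and old: "subseq [l, Suc l, l] x \<or> (\<exists>a<l. subseq [a, l, l] x)" by simp_all
  have "subseq [v, Suc v, v] (x @ [v]) \<or> (\<exists>a<v. subseq [a, v, v] (x @ [v]))"
  proof (cases "v = l")
    case True
    with old show ?thesis by (auto simp: subseq_rev_drop_many)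
  next
    case False
    with v rise have "subseq [v, Suc v] x" by simp
    then show ?thesis by simp
  qed
  with x v show ?thesis by auto
qed

lemma distinct_trans_A: "distinct (map fst (trans_A q))"
  by (cases q) (auto simp: comp_def)

interpretation A: avoider_automaton patterns_A trans_A A_Zeros inv_A
proof
  fix q q' x v
  assume x: "avoider patterns_A x" "inv_A q x"
  show "v \<in> fst ` set (trans_A q) \<longleftrightarrow> avoider patterns_A (x @ [v])"
    using x A_zeros_extend A_run_extend A_desc_extend by (cases q) (auto simp: image_iff)
  show "(v, q') \<in> set (trans_A q) \<Longrightarrow> inv_A q' (x @ [v])"
    using x A_zeros_step A_run_step A_desc_step by (cases q) blast+
qed (auto intro: distinct_trans_A)

text \<open>A word reaches \<open>A_Desc l\<close> after one more letter iff it reaches a state other than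
  \<open>A_Zeros\<close> whose capacity is at least \<open>l\<close>.\<close>

fun capacity_A :: "state_A \<Rightarrow> nat" where
  "capacity_A A_Zeros = 0"
| "capacity_A (A_Run k) = Suc k"
| "capacity_A (A_Desc l) = l"

lemma capacity_A_run: "run trans_A A_Zeros xs = Some q \<Longrightarrow> capacity_A q \<le> length xs"
proof (induction xs arbitrary: q rule: rev_induct)
  case (snoc v xs)
  then obtain q0 where "run trans_A A_Zeros xs = Some q0" "(v, q) \<in> set (trans_A q0)"
    by (auto split: Option.bind_splits dest: map_of_SomeD)
  with snoc.IH have "capacity_A q0 \<le> length xs" "capacity_A q \<le> Suc (capacity_A q0)"
    by (cases q0; auto)+
  then show ?case by simp
qed simp

abbreviation zeros_A :: "nat \<Rightarrow> nat" where
  "zeros_A n \<equiv> card (words_to trans_A A_Zeros n (\<lambda>q. q = A_Zeros))"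

abbreviation runs_A :: "nat \<Rightarrow> nat \<Rightarrow> nat" where
  "runs_A n k \<equiv> card (words_to trans_A A_Zeros n (\<lambda>q. q = A_Run k))"

abbreviation descs_A :: "nat \<Rightarrow> nat \<Rightarrow> nat" where
  "descs_A n l \<equiv> card (words_to trans_A A_Zeros n (\<lambda>q. q = A_Desc l))"

abbreviation above_A :: "nat \<Rightarrow> nat \<Rightarrow> nat" where
  "above_A n l \<equiv> card (words_to trans_A A_Zeros n (\<lambda>q. q \<noteq> A_Zeros \<and> l \<le> capacity_A q))"

lemma length_filter_upt_eq: "length (filter (\<lambda>v. v = l) [0..<n]) = (if l < n then 1 else 0)"
  by (induction n) auto

lemma zeros_A: "zeros_A n = 1"
proof (induction n)
  case (Suc n)
  have "zeros_A (Suc n) = zeros_A n"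
    by (rule card_words_to_Suc_single[OF distinct_trans_A]) (case_tac q; simp add: comp_def)
  with Suc.IH show ?case by simp
qed (simp add: words_to_0)

lemma runs_A: "runs_A n k = (if k < n then 1 else 0)"
proof (induction n arbitrary: k)
  case (Suc n)
  show ?case
  proof (cases k)
    case 0
    have "runs_A (Suc n) 0 = zeros_A n"
      by (rule card_words_to_Suc_single[OF distinct_trans_A]) (case_tac q; simp add: comp_def)
    with 0 show ?thesis by (simp add: zeros_A)
  next
    case (Suc k')
    have "runs_A (Suc n) (Suc k') = runs_A n k'"
      by (rule card_words_to_Suc_single[OF distinct_trans_A]) (case_tac q; simp add: comp_def)
    with Suc Suc.IH show ?thesis by simp
  qed
qed (simp add: words_to_0)

lemma descs_A_Suc: "descs_A (Suc n) l = above_A n l"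
  by (rule card_words_to_Suc_single[OF distinct_trans_A])
    (case_tac q; simp add: comp_def filter_map length_filter_upt_eq)

lemma above_A_bound:
  assumes "n < l"
  shows "above_A n l = 0"
proof -
  have "words_to trans_A A_Zeros n (\<lambda>q. q \<noteq> A_Zeros \<and> l \<le> capacity_A q) = {}"
    using assms capacity_A_run by (fastforce simp: words_to_def)
  then show ?thesis by simp
qed

lemma above_A_split:
  assumes "0 < l"
  shows "above_A n l = above_A n (Suc l) + descs_A n l + runs_A n (l - 1)"
proof -
  have "q \<noteq> A_Zeros \<and> l \<le> capacity_A q \<longleftrightarrow>
      (q \<noteq> A_Zeros \<and> Suc l \<le> capacity_A q) \<or> (q = A_Desc l \<or> q = A_Run (l - 1))" for q
    using assms by (cases q) auto
  then have "above_A n l = card (words_to trans_A A_Zeros n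
      (\<lambda>q. (q \<noteq> A_Zeros \<and> Suc l \<le> capacity_A q) \<or> (q = A_Desc l \<or> q = A_Run (l - 1))))"
    by presburger
  also have "\<dots> = above_A n (Suc l)
      + card (words_to trans_A A_Zeros n (\<lambda>q. q = A_Desc l \<or> q = A_Run (l - 1)))"
    by (rule card_words_to_disj) (use assms in auto)
  also have "card (words_to trans_A A_Zeros n (\<lambda>q. q = A_Desc l \<or> q = A_Run (l - 1)))
      = descs_A n l + runs_A n (l - 1)" by (rule card_words_to_disj) auto
  finally show ?thesis by simp
qed

lemma above_A_0: "above_A n 0 = above_A n 1 + descs_A n 0"
proof -
  have "q \<noteq> A_Zeros \<and> 0 \<le> capacity_A q \<longleftrightarrow> (q \<noteq> A_Zeros \<and> 1 \<le> capacity_A q) \<or> q = A_Desc 0"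
    for q
    by (cases q) auto
  then have "above_A n 0 = card (words_to trans_A A_Zeros n
      (\<lambda>q. (q \<noteq> A_Zeros \<and> 1 \<le> capacity_A q) \<or> q = A_Desc 0))"
    by presburger
  also have "\<dots> = above_A n 1 + descs_A n 0" by (rule card_words_to_disj) auto
  finally show ?thesis .
qed

lemma above_A_closed: "0 < l \<Longrightarrow> above_A n l + 1 = 2 ^ (Suc n - l)"
proof (induction n arbitrary: l)
  case 0
  then show ?case by (simp add: above_A_bound)
next
  case (Suc n)
  show ?case
  proof (cases "Suc n < l")
    case True
    then show ?thesis by (simp add: above_A_bound)
  next
    case False
    then have "l \<le> Suc (Suc n)" by simp
    then show ?thesis
    proof (induction l rule: inc_induct)
      case base
      show ?case by (simp add: above_A_bound)
    next
      case (step m)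
      with Suc.prems have "0 < m" by simp
      have "above_A (Suc n) m = above_A (Suc n) (Suc m) + above_A n m + 1"
        using above_A_split[OF \<open>0 < m\<close>, of "Suc n"] step.hyps by (simp add: descs_A_Suc runs_A)
      moreover have "above_A n m + 1 = 2 ^ (Suc n - m)"
        using Suc.IH[OF \<open>0 < m\<close>] .
      moreover have "Suc (Suc n) - m = Suc (Suc n - m)"
        using step.hyps by simp
      ultimately show ?case
        using step.IH by simp
    qed
  qed
qed

lemma above_A_0_closed: "above_A n 0 + Suc (Suc n) = 2 ^ Suc n"
proof (induction n)
  case 0
  show ?case
    using above_A_0[of 0] above_A_bound[of 0 1] by (simp add: words_to_0)
next
  case (Suc n)
  with above_A_0[of "Suc n"] above_A_closed[of 1 "Suc n"] show ?case by (simp add: descs_A_Suc)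
qed

lemma a_count_A: "a_count patterns_A (Suc n) + Suc n = 2 ^ Suc n"
proof -
  have "a_count patterns_A (Suc n)
      = card (words_to trans_A A_Zeros n (\<lambda>q. q = A_Zeros \<or> (q \<noteq> A_Zeros \<and> 0 \<le> capacity_A q)))"
    unfolding A.a_count_Suc_eq by (simp add: words_to_def)
  also have "\<dots> = zeros_A n + above_A n 0" by (rule card_words_to_disj) auto
  finally show ?thesis
    using zeros_A above_A_0_closed[of n] by simp
qed

section \<open>Avoiders of 0101, 0102, 0120\<close>

abbreviation patterns_B :: "nat list set" where
  "patterns_B \<equiv> {[0,1,0,1], [0,1,0,2], [0,1,2,0]}"

lemma avoider_B_snoc:
  assumes "avoider patterns_B x"
  shows "avoider patterns_B (x @ [v]) \<longleftrightarrow> v \<le> Suc (asc x)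
    \<and> \<not> (\<exists>a. subseq [a, v, a] x \<and> a < v)
    \<and> \<not> (\<exists>a b. subseq [a, b, a] x \<and> a < b \<and> b < v)
    \<and> \<not> (\<exists>b c. subseq [v, b, c] x \<and> v < b \<and> b < c)"
  unfolding avoider_snoc[OF avoider_nonempty[OF assms]] ball_simps
    new_occurrence_0101 new_occurrence_0102 new_occurrence_0120
  using assms by blast

text \<open>The avoiders are the weakly increasing ascent sequences (state \<open>B_Stair m\<close>, last letter
  \<open>m\<close>) and these sequences ending in \<open>d + 1\<close> followed by a nonempty block of letters \<open>d\<close>
  (state \<open>B_Drop d\<close>).\<close>

datatype state_B = B_Stair nat | B_Drop nat

fun trans_B :: "state_B \<Rightarrow> (nat \<times> state_B) list" where
  "trans_B (B_Stair m) =
     [(m, B_Stair m), (Suc m, B_Stair (Suc m))] @ (if 0 < m then [(m - 1, B_Drop (m - 1))] else [])"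
| "trans_B (B_Drop d) = [(d, B_Drop d)]"

fun inv_B :: "state_B \<Rightarrow> nat list \<Rightarrow> bool" where
  "inv_B (B_Stair m) x \<longleftrightarrow> sorted x \<and> last x = m"
| "inv_B (B_Drop d) x \<longleftrightarrow> (\<forall>e\<in>set x. e \<le> Suc d) \<and> subseq [d, Suc d, d] x
     \<and> (\<forall>u<d. subseq [u, d, Suc d] x) \<and> (\<forall>a b. a < b \<and> b \<le> d \<longrightarrow> \<not> subseq [a, b, a] x)"

lemma B_stair_extend:
  assumes x: "avoider patterns_B x" "inv_B (B_Stair m) x"
  shows "avoider patterns_B (x @ [v]) \<longleftrightarrow> v = m \<or> v = Suc m \<or> 0 < m \<and> v = m - 1"
proof -
  from x(2) have sorted: "sorted x" and last: "last x = m" by simp_all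
  have asc: "asc x = m"
    using avoider_sorted(1)[OF x(1) sorted] last by simp
  note stair = avoider_sorted_subseq[OF x(1) sorted, unfolded last]
  have triples: "a \<le> b \<and> b \<le> c \<and> c \<le> m" if "subseq [a, b, c] x" for a b c
    using avoider_sorted_triple[OF x(1) sorted that] last by simp
  consider (allowed) "v = m \<or> v = Suc m \<or> 0 < m \<and> v = m - 1" | (low) "Suc v < m"
    | (large) "Suc m < v"
    by linarith
  then show ?thesis
  proof cases
    case allowed
    with asc show ?thesis
      unfolding avoider_B_snoc[OF x(1)] by (auto dest: triples)
  next
    case low
    then have "new_occurrence [0,1,2,0] x v"
      by (intro new_occurrence_0120I[of v "Suc v" m] stair) auto
    with low show ?thesis
      using new_occurrence_not_avoider[of _ x v patterns_B] by simp
  next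
    case large
    with asc show ?thesis
      unfolding avoider_B_snoc[OF x(1)] by auto
  qed
qed

lemma B_drop_extend:
  assumes x: "avoider patterns_B x" "inv_B (B_Drop d) x"
  shows "avoider patterns_B (x @ [v]) \<longleftrightarrow> v = d"
proof -
  from x(2) have le: "\<And>e. e \<in> set x \<Longrightarrow> e \<le> Suc d" and dip: "subseq [d, Suc d, d] x"
    and rise: "\<And>u. u < d \<Longrightarrow> subseq [u, d, Suc d] x"
    and no_aba: "\<And>a b. a < b \<Longrightarrow> b \<le> d \<Longrightarrow> \<not> subseq [a, b, a] x"
    by auto
  have bound: "c \<le> Suc d" if "subseq [a, b, c] x" for a b c
    using le subseq_triple_in_set[OF that] by blast
  consider (allowed) "v = d" | (up) "v = Suc d" | (large) "Suc d < v" | (low) "v < d" by linarith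
  then show ?thesis
  proof cases
    case allowed
    have "d \<le> asc x"
      using avoider_le_asc[OF x(1)] subseq_triple_in_set[OF dip] by simp
    with allowed show ?thesis
      unfolding avoider_B_snoc[OF x(1)] by (auto dest: no_aba bound)
  next
    case up
    with dip have "new_occurrence [0,1,0,1] x v" by (intro new_occurrence_0101I[of d]) auto
    with up show ?thesis
      using new_occurrence_not_avoider[of _ x v patterns_B] by simp
  next
    case large
    with dip have "new_occurrence [0,1,0,2] x v" by (intro new_occurrence_0102I[of d "Suc d"]) auto
    with large show ?thesis
      using new_occurrence_not_avoider[of _ x v patterns_B] by simp
  next
    case low
    with rise have "new_occurrence [0,1,2,0] x v"
      by (intro new_occurrence_0120I[of v d "Suc d"]) auto
    with low show ?thesis
      using new_occurrence_not_avoider[of _ x v patterns_B] by simp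
  qed
qed

lemma B_stair_step:
  assumes x: "avoider patterns_B x" "inv_B (B_Stair m) x"
    and step: "(v, q') \<in> set (trans_B (B_Stair m))"
  shows "inv_B q' (x @ [v])"
proof -
  from x(2) have sorted: "sorted x" and last: "last x = m" by simp_all
  note stair = avoider_sorted_subseq[OF x(1) sorted, unfolded last]
  from step consider (up) "v = m \<or> v = Suc m" "q' = B_Stair v"
    | (down) "0 < m" "v = m - 1" "q' = B_Drop (m - 1)"
    by (auto split: if_splits)
  then show ?thesis
  proof cases
    case up
    with sorted last avoider_nonempty[OF x(1)] show ?thesis by (auto intro: sorted_snoc_last)
  next
    case down
    then obtain d where d: "m = Suc d" "v = d" "q' = B_Drop d" by (cases m) auto
    have "set x = {..Suc d}"
      using avoider_sorted(2)[OF x(1) sorted] last d(1) by simp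
    moreover have "subseq [d, Suc d] x"
      using d by (intro stair) auto
    moreover have "subseq [u, d, Suc d] x" if "u < d" for u
      using that d by (intro stair) auto
    moreover have "\<not> subseq [a, b, a] x" if "a < b" for a b
      using subseq_triple_sorted[OF _ sorted, of a b a] that by auto
    ultimately show ?thesis
      using d by auto
  qed
qed

lemma B_drop_step:
  assumes "inv_B (B_Drop d) x" "(v, q') \<in> set (trans_B (B_Drop d))"
  shows "inv_B q' (x @ [v])"
  using assms by auto

lemma distinct_trans_B: "distinct (map fst (trans_B q))"
  by (cases q) auto

interpretation B: avoider_automaton patterns_B trans_B "B_Stair 0" inv_B
proof
  fix q q' x v
  assume x: "avoider patterns_B x" "inv_B q x"
  show "v \<in> fst ` set (trans_B q) \<longleftrightarrow> avoider patterns_B (x @ [v])"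
    using x B_stair_extend B_drop_extend by (cases q) auto
  show "(v, q') \<in> set (trans_B q) \<Longrightarrow> inv_B q' (x @ [v])"
    using x B_stair_step B_drop_step by (cases q) blast+
qed (auto intro: distinct_trans_B)

fun class_B :: "state_B \<Rightarrow> nat" where
  "class_B (B_Stair m) = min m 1"
| "class_B (B_Drop d) = 2"

text \<open>\<open>weight_B i j\<close> is the number of transitions from any state of class \<open>i\<close> into class \<open>j\<close>.\<close>

definition weight_B :: "nat \<Rightarrow> nat \<Rightarrow> nat" where
  "weight_B i j = [[1, 1, 0], [0, 2, 1], [0, 0, 1]] ! i ! j"

abbreviation count_B :: "nat \<Rightarrow> nat \<Rightarrow> nat" where
  "count_B n j \<equiv> card (words_to trans_B (B_Stair 0) n (\<lambda>q. class_B q = j))"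

lemma count_B_Suc:
  assumes "j < 3"
  shows "count_B (Suc n) j = (\<Sum>i<3. weight_B i j * count_B n i)"
proof (rule card_words_to_Suc)
  fix q
  show "length (filter ((\<lambda>q. class_B q = j) \<circ> snd) (trans_B q)) = weight_B (class_B q) j"
    using assms
    by (cases q) (auto simp: weight_B_def less_Suc_eq numeral_eq_Suc min_def le_Suc_eq)
  show "class_B q < 3" by (cases q) auto
qed (rule distinct_trans_B)

lemma count_B_closed: "count_B n 0 = 1 \<and> count_B n 1 + 1 = 2 ^ n \<and> count_B n 2 + n + 1 = 2 ^ n"
proof (induction n)
  case 0
  show ?case by (simp add: words_to_0)
next
  case (Suc n)
  then show ?case by (simp add: count_B_Suc weight_B_def numeral_eq_Suc)
qed

lemma a_count_B: "a_count patterns_B (Suc n) + Suc n = 2 ^ Suc n"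
proof -
  have "a_count patterns_B (Suc n) = (\<Sum>j<3. count_B n j)"
    unfolding B.a_count_Suc_eq by (rule card_words_to_partition) (case_tac q; simp)
  with count_B_closed[of n] show ?thesis by (simp add: numeral_eq_Suc)
qed

section \<open>Avoiders of 0101, 0102, 0121\<close>

abbreviation patterns_C :: "nat list set" where
  "patterns_C \<equiv> {[0,1,0,1], [0,1,0,2], [0,1,2,1]}"

lemma avoider_C_snoc:
  assumes "avoider patterns_C x"
  shows "avoider patterns_C (x @ [v]) \<longleftrightarrow> v \<le> Suc (asc x)
    \<and> \<not> (\<exists>a. subseq [a, v, a] x \<and> a < v)
    \<and> \<not> (\<exists>a b. subseq [a, b, a] x \<and> a < b \<and> b < v)
    \<and> \<not> (\<exists>a c. subseq [a, v, c] x \<and> a < v \<and> v < c)"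
  unfolding avoider_snoc[OF avoider_nonempty[OF assms]] ball_simps
    new_occurrence_0101 new_occurrence_0102 new_occurrence_0121
  using assms by blast

text \<open>The avoiders are the weakly increasing ascent sequences and these sequences ending in a
  positive letter followed by a nonempty block of zeros (state \<open>C_Zeros\<close>).\<close>

datatype state_C = C_Stair nat | C_Zeros

fun trans_C :: "state_C \<Rightarrow> (nat \<times> state_C) list" where
  "trans_C (C_Stair m) =
     [(m, C_Stair m), (Suc m, C_Stair (Suc m))] @ (if 0 < m then [(0, C_Zeros)] else [])"
| "trans_C C_Zeros = [(0, C_Zeros)]"

fun inv_C :: "state_C \<Rightarrow> nat list \<Rightarrow> bool" where
  "inv_C (C_Stair m) x \<longleftrightarrow> sorted x \<and> last x = m"
| "inv_C C_Zeros x \<longleftrightarrow> subseq [0, 1, 0] x"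

lemma C_stair_extend:
  assumes x: "avoider patterns_C x" "inv_C (C_Stair m) x"
  shows "avoider patterns_C (x @ [v]) \<longleftrightarrow> v = m \<or> v = Suc m \<or> 0 < m \<and> v = 0"
proof -
  from x(2) have sorted: "sorted x" and last: "last x = m" by simp_all
  have asc: "asc x = m"
    using avoider_sorted(1)[OF x(1) sorted] last by simp
  note stair = avoider_sorted_subseq[OF x(1) sorted, unfolded last]
  have triples: "a \<le> b \<and> b \<le> c \<and> c \<le> m" if "subseq [a, b, c] x" for a b c
    using avoider_sorted_triple[OF x(1) sorted that] last by simp
  consider (allowed) "v = m \<or> v = Suc m \<or> 0 < m \<and> v = 0" | (middle) "0 < v" "v < m"
    | (large) "Suc m < v"
    by linarith
  then show ?thesis
  proof cases
    case allowed
    with asc show ?thesis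
      unfolding avoider_C_snoc[OF x(1)] by (auto dest: triples)
  next
    case middle
    then have "new_occurrence [0,1,2,1] x v" by (intro new_occurrence_0121I[of 0 v m] stair) auto
    with middle show ?thesis
      using new_occurrence_not_avoider[of _ x v patterns_C] by simp
  next
    case large
    with asc show ?thesis
      unfolding avoider_C_snoc[OF x(1)] by auto
  qed
qed

lemma C_zeros_extend:
  assumes x: "avoider patterns_C x" "inv_C C_Zeros x"
  shows "avoider patterns_C (x @ [v]) \<longleftrightarrow> v = 0"
proof -
  from x(2) have dip: "subseq [0, 1, 0] x" by simp
  consider (zero) "v = 0" | (one) "v = 1" | (large) "1 < v" by linarith
  then show ?thesis
  proof cases
    case zero
    then show ?thesis
      unfolding avoider_C_snoc[OF x(1)] by simp
  next
    case one
    with dip have "new_occurrence [0,1,0,1] x v" by (intro new_occurrence_0101I[of 0]) auto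
    with one show ?thesis
      using new_occurrence_not_avoider[of _ x v patterns_C] by simp
  next
    case large
    with dip have "new_occurrence [0,1,0,2] x v" by (intro new_occurrence_0102I[of 0 1]) auto
    with large show ?thesis
      using new_occurrence_not_avoider[of _ x v patterns_C] by simp
  qed
qed

lemma C_stair_step:
  assumes x: "avoider patterns_C x" "inv_C (C_Stair m) x"
    and step: "(v, q') \<in> set (trans_C (C_Stair m))"
  shows "inv_C q' (x @ [v])"
proof -
  from x(2) have sorted: "sorted x" and last: "last x = m" by simp_all
  note stair = avoider_sorted_subseq[OF x(1) sorted, unfolded last]
  from step consider (up) "v = m \<or> v = Suc m" "q' = C_Stair v"
    | (down) "0 < m" "v = 0" "q' = C_Zeros"
    by (auto split: if_splits)
  then show ?thesis
  proof cases
    case up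
    with sorted last avoider_nonempty[OF x(1)] show ?thesis by (auto intro: sorted_snoc_last)
  next
    case down
    have "subseq [0, 1] x"
      using down by (intro stair) auto
    with down show ?thesis by simp
  qed
qed

lemma C_zeros_step:
  assumes "inv_C C_Zeros x" "(v, q') \<in> set (trans_C C_Zeros)"
  shows "inv_C q' (x @ [v])"
  using assms by auto

lemma distinct_trans_C: "distinct (map fst (trans_C q))"
  by (cases q) auto

interpretation C: avoider_automaton patterns_C trans_C "C_Stair 0" inv_C
proof
  fix q q' x v
  assume x: "avoider patterns_C x" "inv_C q x"
  show "v \<in> fst ` set (trans_C q) \<longleftrightarrow> avoider patterns_C (x @ [v])"
    using x C_stair_extend C_zeros_extend by (cases q) auto
  show "(v, q') \<in> set (trans_C q) \<Longrightarrow> inv_C q' (x @ [v])"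
    using x C_stair_step C_zeros_step by (cases q) blast+
qed (auto intro: distinct_trans_C)

fun class_C :: "state_C \<Rightarrow> nat" where
  "class_C (C_Stair m) = min m 1"
| "class_C C_Zeros = 2"

definition weight_C :: "nat \<Rightarrow> nat \<Rightarrow> nat" where
  "weight_C i j = [[1, 1, 0], [0, 2, 1], [0, 0, 1]] ! i ! j"

abbreviation count_C :: "nat \<Rightarrow> nat \<Rightarrow> nat" where
  "count_C n j \<equiv> card (words_to trans_C (C_Stair 0) n (\<lambda>q. class_C q = j))"

lemma count_C_Suc:
  assumes "j < 3"
  shows "count_C (Suc n) j = (\<Sum>i<3. weight_C i j * count_C n i)"
proof (rule card_words_to_Suc)
  fix q
  show "length (filter ((\<lambda>q. class_C q = j) \<circ> snd) (trans_C q)) = weight_C (class_C q) j"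
    using assms by (cases q) (auto simp: weight_C_def less_Suc_eq numeral_eq_Suc min_def le_Suc_eq)
  show "class_C q < 3" by (cases q) auto
qed (rule distinct_trans_C)

lemma count_C_closed: "count_C n 0 = 1 \<and> count_C n 1 + 1 = 2 ^ n \<and> count_C n 2 + n + 1 = 2 ^ n"
proof (induction n)
  case 0
  show ?case by (simp add: words_to_0)
next
  case (Suc n)
  then show ?case by (simp add: count_C_Suc weight_C_def numeral_eq_Suc)
qed

lemma a_count_C: "a_count patterns_C (Suc n) + Suc n = 2 ^ Suc n"
proof -
  have "a_count patterns_C (Suc n) = (\<Sum>j<3. count_C n j)"
    unfolding C.a_count_Suc_eq by (rule card_words_to_partition) (case_tac q; simp)
  with count_C_closed[of n] show ?thesis by (simp add: numeral_eq_Suc)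
qed

section \<open>Avoiders of 0101, 0112, 0121\<close>

abbreviation patterns_D :: "nat list set" where
  "patterns_D \<equiv> {[0,1,0,1], [0,1,1,2], [0,1,2,1]}"

lemma avoider_D_snoc:
  assumes "avoider patterns_D x"
  shows "avoider patterns_D (x @ [v]) \<longleftrightarrow> v \<le> Suc (asc x)
    \<and> \<not> (\<exists>a. subseq [a, v, a] x \<and> a < v)
    \<and> \<not> (\<exists>a b. subseq [a, b, b] x \<and> a < b \<and> b < v)
    \<and> \<not> (\<exists>a c. subseq [a, v, c] x \<and> a < v \<and> v < c)"
  unfolding avoider_snoc[OF avoider_nonempty[OF assms]] ball_simps
    new_occurrence_0101 new_occurrence_0112 new_occurrence_0121
  using assms by blast

lemma D_zero_extend:
  assumes "avoider patterns_D x"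
  shows "avoider patterns_D (x @ [0])"
  unfolding avoider_D_snoc[OF assms] by simp

text \<open>The avoiders consist of zeros interleaved with the successive new maxima \<open>1, 2, \<dots>\<close>, each
  occurring once, possibly followed by repetitions of a final new maximum and then by zeros.
  \<open>D_Low m\<close>: ends in 0 after the maxima \<open>1, \<dots>, m\<close>; \<open>D_Peak k\<close>: ends in the new maximum
  \<open>k + 1\<close>; \<open>D_Plateau k\<close>: ends in a repetition of \<open>k + 1\<close>; \<open>D_Tail\<close>: zeros after a plateau.\<close>

datatype state_D = D_Low nat | D_Peak nat | D_Plateau nat | D_Tail

fun trans_D :: "state_D \<Rightarrow> (nat \<times> state_D) list" where
  "trans_D (D_Low m) = [(0, D_Low m), (Suc m, D_Peak m)]"
| "trans_D (D_Peak k) = [(0, D_Low (Suc k)), (Suc k, D_Plateau k), (Suc (Suc k), D_Peak (Suc k))]"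
| "trans_D (D_Plateau k) = [(0, D_Tail), (Suc k, D_Plateau k)]"
| "trans_D D_Tail = [(0, D_Tail)]"

fun inv_D :: "state_D \<Rightarrow> nat list \<Rightarrow> bool" where
  "inv_D (D_Low m) x \<longleftrightarrow> last x = 0 \<and> asc x = m \<and> (\<forall>e\<in>set x. e \<le> m)
     \<and> (\<forall>a b. a < b \<longrightarrow> \<not> subseq [a, b, b] x) \<and> (\<forall>w. 0 < w \<and> w \<le> m \<longrightarrow> subseq [0, w, 0] x)"
| "inv_D (D_Peak k) x \<longleftrightarrow> last x = Suc k \<and> asc x = Suc k \<and> (\<forall>e\<in>set x. e \<le> Suc k)
     \<and> (\<forall>a b. a < b \<longrightarrow> \<not> subseq [a, b, b] x) \<and> (\<forall>a. \<not> subseq [Suc k, a] x)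
     \<and> subseq [0, Suc k] x \<and> (\<forall>w. 0 < w \<and> w \<le> k \<longrightarrow> subseq [0, w, Suc k] x)"
| "inv_D (D_Plateau k) x \<longleftrightarrow> last x = Suc k \<and> asc x = Suc k \<and> (\<forall>e\<in>set x. e \<le> Suc k)
     \<and> (\<forall>a b. a < b \<and> b \<le> k \<longrightarrow> \<not> subseq [a, b, b] x) \<and> (\<forall>a\<le>k. \<not> subseq [a, Suc k, a] x)
     \<and> subseq [0, Suc k, Suc k] x \<and> (\<forall>w. 0 < w \<and> w \<le> k \<longrightarrow> subseq [0, w, Suc k] x)"
| "inv_D D_Tail x \<longleftrightarrow> (\<exists>b>0. subseq [0, b, b] x \<and> subseq [0, b, 0] x
     \<and> (\<forall>w. 0 < w \<and> w < b \<longrightarrow> subseq [0, w, b] x))"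

lemma D_low_extend:
  assumes x: "avoider patterns_D x" "inv_D (D_Low m) x"
  shows "avoider patterns_D (x @ [v]) \<longleftrightarrow> v = 0 \<or> v = Suc m"
proof -
  from x(2) have asc: "asc x = m" and le: "\<And>e. e \<in> set x \<Longrightarrow> e \<le> m"
    and no_abb: "\<And>a b. a < b \<Longrightarrow> \<not> subseq [a, b, b] x"
    and dip: "\<And>w. 0 < w \<Longrightarrow> w \<le> m \<Longrightarrow> subseq [0, w, 0] x"
    by auto
  have fresh: "\<not> subseq [a, Suc m, c] x" for a c
    using le subseq_triple_in_set[of a "Suc m" c x] by fastforce
  consider (zero) "v = 0" | (new) "v = Suc m" | (old) "0 < v" "v \<le> m" | (large) "Suc m < v"
    by linarith
  then show ?thesis
  proof cases
    case zero
    with D_zero_extend[OF x(1)] show ?thesis by simp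
  next
    case new
    with fresh show ?thesis
      unfolding avoider_D_snoc[OF x(1)] asc by (auto dest: no_abb)
  next
    case old
    with dip have "new_occurrence [0,1,0,1] x v" by (intro new_occurrence_0101I[of 0]) auto
    with old show ?thesis
      using new_occurrence_not_avoider[of _ x v patterns_D] by simp
  next
    case large
    then show ?thesis
      unfolding avoider_D_snoc[OF x(1)] asc by simp
  qed
qed

lemma D_peak_extend:
  assumes x: "avoider patterns_D x" "inv_D (D_Peak k) x"
  shows "avoider patterns_D (x @ [v]) \<longleftrightarrow> v = 0 \<or> v = Suc k \<or> v = Suc (Suc k)"
proof -
  from x(2) have asc: "asc x = Suc k" and le: "\<And>e. e \<in> set x \<Longrightarrow> e \<le> Suc k"
    and no_abb: "\<And>a b. a < b \<Longrightarrow> \<not> subseq [a, b, b] x"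
    and last_peak: "\<And>a. \<not> subseq [Suc k, a] x"
    and rise: "\<And>w. 0 < w \<Longrightarrow> w \<le> k \<Longrightarrow> subseq [0, w, Suc k] x"
    by auto
  have bound: "c \<le> Suc k" if "subseq [a, b, c] x" for a b c
    using le subseq_triple_in_set[OF that] by blast
  have no_dip: False if "subseq [a, Suc k, a] x" for a
    using last_peak subseq_triple_imp_pairs(3)[OF that] by blast
  have fresh: "\<not> subseq [a, Suc (Suc k), c] x" for a c
    using le subseq_triple_in_set[of a "Suc (Suc k)" c x] by fastforce
  consider (zero) "v = 0" | (peak) "v = Suc k" | (new) "v = Suc (Suc k)" | (old) "0 < v" "v \<le> k"
    | (large) "Suc (Suc k) < v" by linarith
  then show ?thesis
  proof cases
    case zero
    with D_zero_extend[OF x(1)] show ?thesis by simp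
  next
    case peak
    then show ?thesis
      unfolding avoider_D_snoc[OF x(1)] asc peak by (auto dest: no_abb bound no_dip)
  next
    case new
    with fresh show ?thesis
      unfolding avoider_D_snoc[OF x(1)] asc new by (auto dest: no_abb)
  next
    case old
    with rise have "new_occurrence [0,1,2,1] x v"
      by (intro new_occurrence_0121I[of 0 v "Suc k"]) auto
    with old show ?thesis
      using new_occurrence_not_avoider[of _ x v patterns_D] by simp
  next
    case large
    then show ?thesis
      unfolding avoider_D_snoc[OF x(1)] asc by simp
  qed
qed

lemma D_plateau_extend:
  assumes x: "avoider patterns_D x" "inv_D (D_Plateau k) x"
  shows "avoider patterns_D (x @ [v]) \<longleftrightarrow> v = 0 \<or> v = Suc k"
proof -
  from x(2) have asc: "asc x = Suc k" and le: "\<And>e. e \<in> set x \<Longrightarrow> e \<le> Suc k"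
    and no_abb: "\<And>a b. a < b \<Longrightarrow> b \<le> k \<Longrightarrow> \<not> subseq [a, b, b] x"
    and no_dip: "\<And>a. a \<le> k \<Longrightarrow> \<not> subseq [a, Suc k, a] x"
    and plateau: "subseq [0, Suc k, Suc k] x"
    and rise: "\<And>w. 0 < w \<Longrightarrow> w \<le> k \<Longrightarrow> subseq [0, w, Suc k] x"
    by auto
  have bound: "c \<le> Suc k" if "subseq [a, b, c] x" for a b c
    using le subseq_triple_in_set[OF that] by blast
  consider (zero) "v = 0" | (repeat) "v = Suc k" | (up) "v = Suc (Suc k)" | (old) "0 < v" "v \<le> k"
    | (large) "Suc (Suc k) < v" by linarith
  then show ?thesis
  proof cases
    case zero
    with D_zero_extend[OF x(1)] show ?thesis by simp
  next
    case repeat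
    then show ?thesis
      unfolding avoider_D_snoc[OF x(1)] asc repeat
      by (auto simp: less_Suc_eq_le dest: no_abb no_dip bound)
  next
    case up
    with plateau have "new_occurrence [0,1,1,2] x v"
      by (intro new_occurrence_0112I[of 0 "Suc k"]) auto
    with up show ?thesis
      using new_occurrence_not_avoider[of _ x v patterns_D] by simp
  next
    case old
    with rise have "new_occurrence [0,1,2,1] x v"
      by (intro new_occurrence_0121I[of 0 v "Suc k"]) auto
    with old show ?thesis
      using new_occurrence_not_avoider[of _ x v patterns_D] by simp
  next
    case large
    then show ?thesis
      unfolding avoider_D_snoc[OF x(1)] asc by simp
  qed
qed

lemma D_tail_extend:
  assumes x: "avoider patterns_D x" "inv_D D_Tail x"
  shows "avoider patterns_D (x @ [v]) \<longleftrightarrow> v = 0"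
proof -
  from x(2) obtain b where b: "0 < b" "subseq [0, b, b] x" "subseq [0, b, 0] x"
    and rise: "\<And>w. 0 < w \<Longrightarrow> w < b \<Longrightarrow> subseq [0, w, b] x" by auto
  consider (zero) "v = 0" | (top) "v = b" | (middle) "0 < v" "v < b" | (large) "b < v" by linarith
  then show ?thesis
  proof cases
    case zero
    with D_zero_extend[OF x(1)] show ?thesis by simp
  next
    case top
    with b have "new_occurrence [0,1,0,1] x v" by (intro new_occurrence_0101I[of 0]) auto
    with top b show ?thesis
      using new_occurrence_not_avoider[of _ x v patterns_D] by simp
  next
    case middle
    with rise have "new_occurrence [0,1,2,1] x v" by (intro new_occurrence_0121I[of 0 v b]) auto
    with middle show ?thesis
      using new_occurrence_not_avoider[of _ x v patterns_D] by simp
  next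
    case large
    with b have "new_occurrence [0,1,1,2] x v" by (intro new_occurrence_0112I[of 0 b]) auto
    with large b show ?thesis
      using new_occurrence_not_avoider[of _ x v patterns_D] by simp
  qed
qed

lemma D_low_step:
  assumes x: "avoider patterns_D x" "inv_D (D_Low m) x"
    and step: "(v, q') \<in> set (trans_D (D_Low m))"
  shows "inv_D q' (x @ [v])"
proof -
  from x(2) have inv: "last x = 0" "asc x = m" "\<forall>e\<in>set x. e \<le> m"
    "\<forall>a b. a < b \<longrightarrow> \<not> subseq [a, b, b] x" "\<forall>w. 0 < w \<and> w \<le> m \<longrightarrow> subseq [0, w, 0] x"
    by simp_all
  have ne: "x \<noteq> []"
    using avoider_nonempty[OF x(1)] .
  from step consider "v = 0" "q' = D_Low m" | "v = Suc m" "q' = D_Peak m" by auto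
  then show ?thesis
  proof cases
    case 1
    with inv ne show ?thesis by (simp add: asc_snoc)
  next
    case 2
    have "0 \<in> set x"
      using inv(1) ne last_in_set by fastforce
    moreover have fresh: "Suc m \<notin> set x"
      using inv(3) by fastforce
    moreover have "\<not> subseq ys x" if "Suc m \<in> set ys" for ys
      using fresh that set_mono_subseq[of ys x] by blast
    moreover have "subseq [0, w] x" if "0 < w" "w \<le> m" for w
      using inv(5) that subseq_triple_imp_pairs(1)[of 0 w 0 x] by simp
    moreover have "\<forall>e\<in>set x. e \<le> Suc m"
      using inv(3) by fastforce
    ultimately show ?thesis
      using 2 inv ne by (simp add: asc_snoc less_Suc_eq_le)
  qed
qed


lemma D_peak_step:
  assumes x: "avoider patterns_D x" "inv_D (D_Peak k) x"
    and step: "(v, q') \<in> set (trans_D (D_Peak k))"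
  shows "inv_D q' (x @ [v])"
proof -
  from x(2) have inv: "last x = Suc k" "asc x = Suc k" "\<forall>e\<in>set x. e \<le> Suc k"
    "\<forall>a b. a < b \<longrightarrow> \<not> subseq [a, b, b] x" "\<forall>a. \<not> subseq [Suc k, a] x" "subseq [0, Suc k] x"
    "\<forall>w. 0 < w \<and> w \<le> k \<longrightarrow> subseq [0, w, Suc k] x"
    by simp_all
  have ne: "x \<noteq> []"
    using avoider_nonempty[OF x(1)] .
  have pairs: "subseq [0, w] x" if "0 < w" "w \<le> Suc k" for w
  proof (cases "w = Suc k")
    case False
    with that inv(7) show ?thesis
      using subseq_triple_imp_pairs(1)[of 0 w "Suc k" x] by simp
  qed (use inv(6) in simp)
  from step consider "v = 0" "q' = D_Low (Suc k)" | "v = Suc k" "q' = D_Plateau k"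
    | "v = Suc (Suc k)" "q' = D_Peak (Suc k)" by auto
  then show ?thesis
  proof cases
    case 1
    with inv ne pairs show ?thesis by (simp add: asc_snoc)
  next
    case 2
    have "\<not> subseq [a, Suc k, a] x" for a
      using inv(5) subseq_triple_imp_pairs(3)[of a "Suc k" a x] by blast
    with 2 inv ne pairs show ?thesis by (simp add: asc_snoc less_Suc_eq_le)
  next
    case 3
    have "0 \<in> set x"
      using set_mono_subseq[OF inv(6)] by simp
    moreover have fresh: "Suc (Suc k) \<notin> set x"
      using inv(3) by fastforce
    moreover have "\<not> subseq ys x" if "Suc (Suc k) \<in> set ys" for ys
      using fresh that set_mono_subseq[of ys x] by blast
    moreover have "\<forall>e\<in>set x. e \<le> Suc (Suc k)"
      using inv(3) by fastforce
    ultimately show ?thesis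
      using 3 inv ne pairs by (simp add: asc_snoc less_Suc_eq_le)
  qed
qed

lemma D_plateau_step:
  assumes x: "avoider patterns_D x" "inv_D (D_Plateau k) x"
    and step: "(v, q') \<in> set (trans_D (D_Plateau k))"
  shows "inv_D q' (x @ [v])"
proof -
  from x(2) have inv: "last x = Suc k" "asc x = Suc k" "\<forall>e\<in>set x. e \<le> Suc k"
    "\<forall>a b. a < b \<and> b \<le> k \<longrightarrow> \<not> subseq [a, b, b] x" "\<forall>a\<le>k. \<not> subseq [a, Suc k, a] x"
    "subseq [0, Suc k, Suc k] x" "\<forall>w. 0 < w \<and> w \<le> k \<longrightarrow> subseq [0, w, Suc k] x"
    by simp_all
  from step consider "v = 0" "q' = D_Tail" | "v = Suc k" "q' = D_Plateau k" by auto
  then show ?thesis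
  proof cases
    case 1
    have "subseq [0, Suc k] x"
      using subseq_triple_imp_pairs(1)[OF inv(6)] .
    with 1 inv show ?thesis by simp (intro exI[of _ "Suc k"], simp add: less_Suc_eq_le)
  next
    case 2
    with inv avoider_nonempty[OF x(1)] show ?thesis by (simp add: asc_snoc)
  qed
qed

lemma D_tail_step:
  assumes "inv_D D_Tail x" "(v, q') \<in> set (trans_D D_Tail)"
  shows "inv_D q' (x @ [v])"
  using assms by auto

lemma distinct_trans_D: "distinct (map fst (trans_D q))"
  by (cases q) auto

interpretation D: avoider_automaton patterns_D trans_D "D_Low 0" inv_D
proof
  fix q q' x v
  assume x: "avoider patterns_D x" "inv_D q x"
  show "v \<in> fst ` set (trans_D q) \<longleftrightarrow> avoider patterns_D (x @ [v])"
    using x D_low_extend D_peak_extend D_plateau_extend D_tail_extend by (cases q) auto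
  show "(v, q') \<in> set (trans_D q) \<Longrightarrow> inv_D q' (x @ [v])"
    using x D_low_step D_peak_step D_plateau_step D_tail_step by (cases q) blast+
qed (auto intro: distinct_trans_D)

fun class_D :: "state_D \<Rightarrow> nat" where
  "class_D (D_Low m) = 0"
| "class_D (D_Peak k) = 1"
| "class_D (D_Plateau k) = 2"
| "class_D D_Tail = 3"

definition weight_D :: "nat \<Rightarrow> nat \<Rightarrow> nat" where
  "weight_D i j = [[1, 1, 0, 0], [1, 1, 1, 0], [0, 0, 1, 1], [0, 0, 0, 1]] ! i ! j"

abbreviation count_D :: "nat \<Rightarrow> nat \<Rightarrow> nat" where
  "count_D n j \<equiv> card (words_to trans_D (D_Low 0) n (\<lambda>q. class_D q = j))"

lemma count_D_Suc:
  assumes "j < 4"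
  shows "count_D (Suc n) j = (\<Sum>i<4. weight_D i j * count_D n i)"
proof (rule card_words_to_Suc)
  fix q
  show "length (filter ((\<lambda>q. class_D q = j) \<circ> snd) (trans_D q)) = weight_D (class_D q) j"
    using assms by (cases q) (auto simp: weight_D_def less_Suc_eq numeral_eq_Suc)
  show "class_D q < 4" by (cases q) auto
qed (rule distinct_trans_D)

lemma count_D_closed:
  "count_D (Suc n) 0 = 2 ^ n \<and> count_D (Suc n) 1 = 2 ^ n \<and> count_D (Suc n) 2 + 1 = 2 ^ n
    \<and> count_D (Suc n) 3 + Suc n = 2 ^ n"
proof (induction n)
  case 0
  show ?case by (simp add: count_D_Suc weight_D_def numeral_eq_Suc words_to_0)
next
  case (Suc n)
  then show ?case by (simp add: count_D_Suc weight_D_def numeral_eq_Suc)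
qed

lemma a_count_D: "a_count patterns_D (Suc n) + Suc n = 2 ^ Suc n"
proof -
  have "a_count patterns_D (Suc n) = (\<Sum>j<4. count_D n j)"
    unfolding D.a_count_Suc_eq by (rule card_words_to_partition) (case_tac q; simp)
  then show ?thesis
    using count_D_closed[of "n - 1"] by (cases n) (simp_all add: numeral_eq_Suc words_to_0)
qed

section \<open>Avoiders of 0101, 0120, 0121\<close>

abbreviation patterns_E :: "nat list set" where
  "patterns_E \<equiv> {[0,1,0,1], [0,1,2,0], [0,1,2,1]}"

lemma avoider_E_snoc:
  assumes "avoider patterns_E x"
  shows "avoider patterns_E (x @ [v]) \<longleftrightarrow> v \<le> Suc (asc x)
    \<and> \<not> (\<exists>a. subseq [a, v, a] x \<and> a < v)
    \<and> \<not> (\<exists>b c. subseq [v, b, c] x \<and> v < b \<and> b < c)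
    \<and> \<not> (\<exists>a c. subseq [a, v, c] x \<and> a < v \<and> v < c)"
  unfolding avoider_snoc[OF avoider_nonempty[OF assms]] ball_simps
    new_occurrence_0101 new_occurrence_0120 new_occurrence_0121
  using assms by blast

text \<open>The avoiders are the weakly increasing ascent sequences and the words \<open>0\<dots>0 1\<dots>1 0\<dots>0\<close>
  (state \<open>E_Dip\<close>) followed by a weakly increasing word that starts with 2 and increases by
  steps of at most one (state \<open>E_High m\<close>, last letter \<open>m\<close>).\<close>

datatype state_E = E_Stair nat | E_Dip | E_High nat

fun trans_E :: "state_E \<Rightarrow> (nat \<times> state_E) list" where
  "trans_E (E_Stair m) =
     [(m, E_Stair m), (Suc m, E_Stair (Suc m))] @ (if m = 1 then [(0, E_Dip)] else [])"
| "trans_E E_Dip = [(0, E_Dip), (2, E_High 2)]"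
| "trans_E (E_High m) = [(m, E_High m), (Suc m, E_High (Suc m))]"

fun inv_E :: "state_E \<Rightarrow> nat list \<Rightarrow> bool" where
  "inv_E (E_Stair m) x \<longleftrightarrow> sorted x \<and> last x = m"
| "inv_E E_Dip x \<longleftrightarrow> (\<forall>e\<in>set x. e \<le> 1) \<and> subseq [0, 1, 0] x \<and> last x = 0 \<and> asc x = 1"
| "inv_E (E_High m) x \<longleftrightarrow> 2 \<le> m \<and> last x = m \<and> asc x = m \<and> (\<forall>e\<in>set x. e \<le> m)
     \<and> (\<forall>w. 0 < w \<and> w < m \<longrightarrow> subseq [0, w, m] x) \<and> (\<forall>a<m. \<not> subseq [a, m, a] x)"

lemma E_stair_extend:
  assumes x: "avoider patterns_E x" "inv_E (E_Stair m) x"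
  shows "avoider patterns_E (x @ [v]) \<longleftrightarrow> v = m \<or> v = Suc m \<or> m = 1 \<and> v = 0"
proof -
  from x(2) have sorted: "sorted x" and last: "last x = m" by simp_all
  have asc: "asc x = m"
    using avoider_sorted(1)[OF x(1) sorted] last by simp
  note stair = avoider_sorted_subseq[OF x(1) sorted, unfolded last]
  have triples: "a \<le> b \<and> b \<le> c \<and> c \<le> m" if "subseq [a, b, c] x" for a b c
    using avoider_sorted_triple[OF x(1) sorted that] last by simp
  consider (allowed) "v = m \<or> v = Suc m \<or> m = 1 \<and> v = 0" | (zero) "v = 0" "2 \<le> m"
    | (middle) "0 < v" "v < m" | (large) "Suc m < v"
    by linarith
  then show ?thesis
  proof cases
    case allowed
    with asc show ?thesis
      unfolding avoider_E_snoc[OF x(1)] by (auto dest: triples)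
  next
    case zero
    then have "new_occurrence [0,1,2,0] x v" by (intro new_occurrence_0120I[of v 1 m] stair) auto
    with zero show ?thesis
      using new_occurrence_not_avoider[of _ x v patterns_E] by simp
  next
    case middle
    then have "new_occurrence [0,1,2,1] x v" by (intro new_occurrence_0121I[of 0 v m] stair) auto
    with middle show ?thesis
      using new_occurrence_not_avoider[of _ x v patterns_E] by simp
  next
    case large
    with asc show ?thesis
      unfolding avoider_E_snoc[OF x(1)] by auto
  qed
qed

lemma E_dip_extend:
  assumes x: "avoider patterns_E x" "inv_E E_Dip x"
  shows "avoider patterns_E (x @ [v]) \<longleftrightarrow> v = 0 \<or> v = 2"
proof -
  from x(2) have dip: "subseq [0, 1, 0] x" and asc: "asc x = 1" by simp_all
  from x(2) have bound: "a \<le> 1 \<and> b \<le> 1 \<and> c \<le> 1" if "subseq [a, b, c] x" for a b c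
    using subseq_triple_in_set[OF that] by auto
  consider (allowed) "v = 0 \<or> v = 2" | (one) "v = 1" | (large) "2 < v" by linarith
  then show ?thesis
  proof cases
    case allowed
    with asc show ?thesis
      unfolding avoider_E_snoc[OF x(1)] by (auto dest: bound)
  next
    case one
    with dip have "new_occurrence [0,1,0,1] x v" by (intro new_occurrence_0101I[of 0]) auto
    with one show ?thesis
      using new_occurrence_not_avoider[of _ x v patterns_E] by simp
  next
    case large
    with asc show ?thesis
      unfolding avoider_E_snoc[OF x(1)] by simp
  qed
qed

lemma E_high_extend:
  assumes x: "avoider patterns_E x" "inv_E (E_High m) x"
  shows "avoider patterns_E (x @ [v]) \<longleftrightarrow> v = m \<or> v = Suc m"
proof -
  from x(2) have m: "2 \<le> m" and asc: "asc x = m"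
    and rise: "\<And>w. 0 < w \<Longrightarrow> w < m \<Longrightarrow> subseq [0, w, m] x"
    and no_dip: "\<And>a. a < m \<Longrightarrow> \<not> subseq [a, m, a] x" by auto
  from x(2) have bound: "a \<le> m \<and> b \<le> m \<and> c \<le> m" if "subseq [a, b, c] x" for a b c
    using subseq_triple_in_set[OF that] by auto
  consider (allowed) "v = m \<or> v = Suc m" | (zero) "v = 0" | (middle) "0 < v" "v < m"
    | (large) "Suc m < v" by linarith
  then show ?thesis
  proof cases
    case allowed
    then show ?thesis
      unfolding avoider_E_snoc[OF x(1)] asc by (auto dest: bound no_dip)
  next
    case zero
    with m rise[of 1] have "new_occurrence [0,1,2,0] x v"
      by (intro new_occurrence_0120I[of v 1 m]) auto
    with zero m show ?thesis
      using new_occurrence_not_avoider[of _ x v patterns_E] by simp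
  next
    case middle
    with rise have "new_occurrence [0,1,2,1] x v" by (intro new_occurrence_0121I[of 0 v m]) auto
    with middle show ?thesis
      using new_occurrence_not_avoider[of _ x v patterns_E] by simp
  next
    case large
    with asc show ?thesis
      unfolding avoider_E_snoc[OF x(1)] by simp
  qed
qed

lemma E_stair_step:
  assumes x: "avoider patterns_E x" "inv_E (E_Stair m) x"
    and step: "(v, q') \<in> set (trans_E (E_Stair m))"
  shows "inv_E q' (x @ [v])"
proof -
  from x(2) have sorted: "sorted x" and last: "last x = m" by simp_all
  note stair = avoider_sorted_subseq[OF x(1) sorted, unfolded last]
  from step consider (up) "v = m \<or> v = Suc m" "q' = E_Stair v" | (down) "m = 1" "v = 0" "q' = E_Dip"
    by (auto split: if_splits)
  then show ?thesis
  proof cases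
    case up
    with sorted last avoider_nonempty[OF x(1)] show ?thesis by (auto intro: sorted_snoc_last)
  next
    case down
    have "set x = {..1}" and "asc x = 1"
      using avoider_sorted[OF x(1) sorted] last down by simp_all
    moreover have "subseq [0, 1] x"
      using down by (intro stair) auto
    ultimately show ?thesis
      using down last avoider_nonempty[OF x(1)] by (simp add: atMost_Suc asc_snoc)
  qed
qed

lemma E_dip_step:
  assumes x: "avoider patterns_E x" "inv_E E_Dip x" and step: "(v, q') \<in> set (trans_E E_Dip)"
  shows "inv_E q' (x @ [v])"
proof -
  from x have le: "\<And>e. e \<in> set x \<Longrightarrow> e \<le> 1" and dip: "subseq [0, 1, 0] x"
    and last: "last x = 0" and asc: "asc x = 1" by auto
  from step consider "v = 0" "q' = E_Dip" | "v = 2" "q' = E_High 2" by auto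
  then show ?thesis
  proof cases
    case 1
    with le dip last asc avoider_nonempty[OF x(1)] show ?thesis by (simp add: asc_snoc)
  next
    case 2
    have "2 \<notin> set x"
      using le[of 2] by auto
    then have "\<not> subseq [a, 2, b] x" for a b
      using subseq_triple_in_set[of a 2 b x] by auto
    moreover have "\<forall>e\<in>set x. e \<le> 2"
      using le by fastforce
    moreover have "\<forall>w. 0 < w \<and> w < 2 \<longrightarrow> subseq [0, w, 2] (x @ [2])"
      using subseq_triple_imp_pairs(1)[OF dip] by (auto simp: less_2_cases_iff)
    ultimately show ?thesis
      using 2 last asc avoider_nonempty[OF x(1)] by (simp add: asc_snoc)
  qed
qed

lemma E_high_step:
  assumes x: "avoider patterns_E x" "inv_E (E_High m) x"
    and step: "(v, q') \<in> set (trans_E (E_High m))"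
  shows "inv_E q' (x @ [v])"
proof -
  from x have m: "2 \<le> m" "last x = m" "asc x = m" and le: "\<And>e. e \<in> set x \<Longrightarrow> e \<le> m"
    and rise: "\<And>w. 0 < w \<Longrightarrow> w < m \<Longrightarrow> subseq [0, w, m] x"
    and no_dip: "\<And>a. a < m \<Longrightarrow> \<not> subseq [a, m, a] x" by auto
  from step consider "v = m" "q' = E_High m" | "v = Suc m" "q' = E_High (Suc m)" by auto
  then show ?thesis
  proof cases
    case 1
    have "asc (x @ [m]) = m"
      using m avoider_nonempty[OF x(1)] by (simp add: asc_snoc)
    with 1 m le rise no_dip show ?thesis by auto
  next
    case 2
    have "asc (x @ [Suc m]) = Suc m"
      using m avoider_nonempty[OF x(1)] by (simp add: asc_snoc)
    moreover have "subseq [0, w] x" if "0 < w" "w \<le> m" for w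
      using rise[of 1] rise[of w] m(1) that subseq_triple_imp_pairs(1,2)
      by (cases "w = m") simp_all
    moreover have "\<not> subseq [a, Suc m, b] x" for a b
      using le subseq_triple_in_set[of a "Suc m" b x] by fastforce
    moreover have "\<forall>e\<in>set x. e \<le> Suc m"
      using le by fastforce
    ultimately show ?thesis
      using 2 m by (auto simp: less_Suc_eq_le)
  qed
qed

lemma distinct_trans_E: "distinct (map fst (trans_E q))"
  by (cases q) auto

interpretation E: avoider_automaton patterns_E trans_E "E_Stair 0" inv_E
proof
  fix q q' x v
  assume x: "avoider patterns_E x" "inv_E q x"
  show "v \<in> fst ` set (trans_E q) \<longleftrightarrow> avoider patterns_E (x @ [v])"
    using x E_stair_extend E_dip_extend E_high_extend by (cases q) auto
  show "(v, q') \<in> set (trans_E q) \<Longrightarrow> inv_E q' (x @ [v])"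
    using x E_stair_step E_dip_step E_high_step by (cases q) blast+
qed (auto intro: distinct_trans_E)

fun class_E :: "state_E \<Rightarrow> nat" where
  "class_E (E_Stair m) = min m 2"
| "class_E E_Dip = 3"
| "class_E (E_High m) = 3"

definition weight_E :: "nat \<Rightarrow> nat \<Rightarrow> nat" where
  "weight_E i j = [[1, 1, 0, 0], [0, 1, 1, 1], [0, 0, 2, 0], [0, 0, 0, 2]] ! i ! j"

abbreviation count_E :: "nat \<Rightarrow> nat \<Rightarrow> nat" where
  "count_E n j \<equiv> card (words_to trans_E (E_Stair 0) n (\<lambda>q. class_E q = j))"

lemma count_E_Suc:
  assumes "j < 4"
  shows "count_E (Suc n) j = (\<Sum>i<4. weight_E i j * count_E n i)"
proof (rule card_words_to_Suc)
  fix q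
  show "length (filter ((\<lambda>q. class_E q = j) \<circ> snd) (trans_E q)) = weight_E (class_E q) j"
    using assms by (cases q) (auto simp: weight_E_def less_Suc_eq numeral_eq_Suc min_def le_Suc_eq)
  show "class_E q < 4" by (cases q) auto
qed (rule distinct_trans_E)

lemma count_E_closed:
  "count_E n 0 = 1 \<and> count_E n 1 = n \<and> count_E n 2 + n + 1 = 2 ^ n \<and> count_E n 3 + n + 1 = 2 ^ n"
proof (induction n)
  case 0
  show ?case by (simp add: words_to_0)
next
  case (Suc n)
  then show ?case by (simp add: count_E_Suc weight_E_def numeral_eq_Suc)
qed

lemma a_count_E: "a_count patterns_E (Suc n) + Suc n = 2 ^ Suc n"
proof -
  have "a_count patterns_E (Suc n) = (\<Sum>j<4. count_E n j)"
    unfolding E.a_count_Suc_eq by (rule card_words_to_partition) (case_tac q; simp)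
  with count_E_closed[of n] show ?thesis by (simp add: numeral_eq_Suc)
qed

section \<open>Avoiders of 0102, 0120, 0121\<close>

abbreviation patterns_F :: "nat list set" where
  "patterns_F \<equiv> {[0,1,0,2], [0,1,2,0], [0,1,2,1]}"

lemma avoider_F_snoc:
  assumes "avoider patterns_F x"
  shows "avoider patterns_F (x @ [v]) \<longleftrightarrow> v \<le> Suc (asc x)
    \<and> \<not> (\<exists>a b. subseq [a, b, a] x \<and> a < b \<and> b < v)
    \<and> \<not> (\<exists>b c. subseq [v, b, c] x \<and> v < b \<and> b < c)
    \<and> \<not> (\<exists>a c. subseq [a, v, c] x \<and> a < v \<and> v < c)"
  unfolding avoider_snoc[OF avoider_nonempty[OF assms]] ball_simps
    new_occurrence_0102 new_occurrence_0120 new_occurrence_0121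
  using assms by blast

text \<open>The avoiders are the weakly increasing ascent sequences and the words over \<open>{0, 1}\<close>; the
  latter that are not weakly increasing lead to \<open>F_Binary\<close>.\<close>

datatype state_F = F_Stair nat | F_Binary

fun trans_F :: "state_F \<Rightarrow> (nat \<times> state_F) list" where
  "trans_F (F_Stair m) =
     [(m, F_Stair m), (Suc m, F_Stair (Suc m))] @ (if m = 1 then [(0, F_Binary)] else [])"
| "trans_F F_Binary = [(0, F_Binary), (1, F_Binary)]"

fun inv_F :: "state_F \<Rightarrow> nat list \<Rightarrow> bool" where
  "inv_F (F_Stair m) x \<longleftrightarrow> sorted x \<and> last x = m"
| "inv_F F_Binary x \<longleftrightarrow> set x \<subseteq> {0, 1} \<and> subseq [0, 1, 0] x"

lemma F_stair_extend:
  assumes x: "avoider patterns_F x" "inv_F (F_Stair m) x"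
  shows "avoider patterns_F (x @ [v]) \<longleftrightarrow> v = m \<or> v = Suc m \<or> m = 1 \<and> v = 0"
proof -
  from x(2) have sorted: "sorted x" and last: "last x = m" by simp_all
  have asc: "asc x = m"
    using avoider_sorted(1)[OF x(1) sorted] last by simp
  note stair = avoider_sorted_subseq[OF x(1) sorted, unfolded last]
  have triples: "a \<le> b \<and> b \<le> c \<and> c \<le> m" if "subseq [a, b, c] x" for a b c
    using avoider_sorted_triple[OF x(1) sorted that] last by simp
  consider (allowed) "v = m \<or> v = Suc m \<or> m = 1 \<and> v = 0" | (zero) "v = 0" "2 \<le> m"
    | (middle) "0 < v" "v < m" | (large) "Suc m < v"
    by linarith
  then show ?thesis
  proof cases
    case allowed
    with asc show ?thesis
      unfolding avoider_F_snoc[OF x(1)] by (auto dest: triples)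
  next
    case zero
    then have "new_occurrence [0,1,2,0] x v" by (intro new_occurrence_0120I[of v 1 m] stair) auto
    with zero show ?thesis
      using new_occurrence_not_avoider[of _ x v patterns_F] by simp
  next
    case middle
    then have "new_occurrence [0,1,2,1] x v" by (intro new_occurrence_0121I[of 0 v m] stair) auto
    with middle show ?thesis
      using new_occurrence_not_avoider[of _ x v patterns_F] by simp
  next
    case large
    with asc show ?thesis
      unfolding avoider_F_snoc[OF x(1)] by auto
  qed
qed

lemma F_binary_extend:
  assumes x: "avoider patterns_F x" "inv_F F_Binary x"
  shows "avoider patterns_F (x @ [v]) \<longleftrightarrow> v \<le> 1"
proof (cases "v \<le> 1")
  case True
  have "a \<le> 1 \<and> b \<le> 1 \<and> c \<le> 1" if "subseq [a, b, c] x" for a b c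
    using subseq_triple_in_set[OF that] x(2) by auto
  with True show ?thesis
    unfolding avoider_F_snoc[OF x(1)] by fastforce
next
  case False
  with x(2) have "new_occurrence [0,1,0,2] x v" by (intro new_occurrence_0102I[of 0 1]) auto
  with False show ?thesis
    using new_occurrence_not_avoider[of _ x v patterns_F] by simp
qed

lemma F_stair_step:
  assumes x: "avoider patterns_F x" "inv_F (F_Stair m) x"
    and step: "(v, q') \<in> set (trans_F (F_Stair m))"
  shows "inv_F q' (x @ [v])"
proof -
  from x(2) have sorted: "sorted x" and last: "last x = m" by simp_all
  note stair = avoider_sorted_subseq[OF x(1) sorted, unfolded last]
  from step consider (up) "v = m \<or> v = Suc m" "q' = F_Stair v"
    | (down) "m = 1" "v = 0" "q' = F_Binary"
    by (auto split: if_splits)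
  then show ?thesis
  proof cases
    case up
    with sorted last avoider_nonempty[OF x(1)] show ?thesis by (auto intro: sorted_snoc_last)
  next
    case down
    have "set x = {..1}"
      using avoider_sorted(2)[OF x(1) sorted] last down by simp
    moreover have "subseq [0, 1] x"
      using down by (intro stair) auto
    ultimately show ?thesis
      using down by (simp add: atMost_Suc)
  qed
qed

lemma F_binary_step:
  assumes "inv_F F_Binary x" "(v, q') \<in> set (trans_F F_Binary)"
  shows "inv_F q' (x @ [v])"
  using assms by auto

lemma distinct_trans_F: "distinct (map fst (trans_F q))"
  by (cases q) auto

interpretation F: avoider_automaton patterns_F trans_F "F_Stair 0" inv_F
proof
  fix q q' x v
  assume x: "avoider patterns_F x" "inv_F q x"
  show "v \<in> fst ` set (trans_F q) \<longleftrightarrow> avoider patterns_F (x @ [v])"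
    using x F_stair_extend F_binary_extend by (cases q) auto
  show "(v, q') \<in> set (trans_F q) \<Longrightarrow> inv_F q' (x @ [v])"
    using x F_stair_step F_binary_step by (cases q) blast+
qed (auto intro: distinct_trans_F)

fun class_F :: "state_F \<Rightarrow> nat" where
  "class_F (F_Stair m) = min m 2"
| "class_F F_Binary = 3"

definition weight_F :: "nat \<Rightarrow> nat \<Rightarrow> nat" where
  "weight_F i j = [[1, 1, 0, 0], [0, 1, 1, 1], [0, 0, 2, 0], [0, 0, 0, 2]] ! i ! j"

abbreviation count_F :: "nat \<Rightarrow> nat \<Rightarrow> nat" where
  "count_F n j \<equiv> card (words_to trans_F (F_Stair 0) n (\<lambda>q. class_F q = j))"

lemma count_F_Suc:
  assumes "j < 4"
  shows "count_F (Suc n) j = (\<Sum>i<4. weight_F i j * count_F n i)"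
proof (rule card_words_to_Suc)
  fix q
  show "length (filter ((\<lambda>q. class_F q = j) \<circ> snd) (trans_F q)) = weight_F (class_F q) j"
    using assms by (cases q) (auto simp: weight_F_def less_Suc_eq numeral_eq_Suc min_def le_Suc_eq)
  show "class_F q < 4" by (cases q) auto
qed (rule distinct_trans_F)

lemma count_F_closed:
  "count_F n 0 = 1 \<and> count_F n 1 = n \<and> count_F n 2 + n + 1 = 2 ^ n \<and> count_F n 3 + n + 1 = 2 ^ n"
proof (induction n)
  case 0
  show ?case by (simp add: words_to_0)
next
  case (Suc n)
  then show ?case by (simp add: count_F_Suc weight_F_def numeral_eq_Suc)
qed

lemma a_count_F: "a_count patterns_F (Suc n) + Suc n = 2 ^ Suc n"
proof -
  have "a_count patterns_F (Suc n) = (\<Sum>j<4. count_F n j)"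
    unfolding F.a_count_Suc_eq by (rule card_words_to_partition) (case_tac q; simp)
  with count_F_closed[of n] show ?thesis by (simp add: numeral_eq_Suc)
qed

theorem theorem4p3:
  fixes n :: nat
  assumes "n \<ge> 1"
  shows "a_count {[0,1,0,1], [0,1,0,2], [0,1,1,2]} n = 2 ^ n - n
       \<and> a_count {[0,1,0,1], [0,1,0,2], [0,1,2,0]} n = 2 ^ n - n
       \<and> a_count {[0,1,0,1], [0,1,0,2], [0,1,2,1]} n = 2 ^ n - n
       \<and> a_count {[0,1,0,1], [0,1,1,2], [0,1,2,1]} n = 2 ^ n - n
       \<and> a_count {[0,1,0,1], [0,1,2,0], [0,1,2,1]} n = 2 ^ n - n
       \<and> a_count {[0,1,0,2], [0,1,2,0], [0,1,2,1]} n = 2 ^ n - n"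
proof -
  obtain m where n: "n = Suc m"
    using assms by (cases n) auto
  have count: "a_count P n = 2 ^ n - n" if "a_count P (Suc m) + Suc m = 2 ^ Suc m" for P
    using that n by simp
  show ?thesis
    using count[OF a_count_A] count[OF a_count_B] count[OF a_count_C] count[OF a_count_D]
      count[OF a_count_E] count[OF a_count_F] by simp
qed

end
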